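(* Let $X$ be a finite set and $\mathcal{P}^1,\dots,\mathcal{P}^M$ partitions of $X$, with Multiscale Clustering Filtration $(K^m)_{m\le M}$ and Multiscale Clustering Nerve Filtration $(N^m)_{m\le M}$. Then for all integers $k\ge0$, $1\le m\le M$ and $p\ge0$ with $m+p\le M$, $H_k^p(N^m)\cong H_k^p(K^m)$.
   Context: A partition of $X$ is a collection of non-empty pairwise disjoint subsets (clusters) whose union is $X$; $\#\mathcal{P}$ is its number of clusters. For a finite non-empty set $C$, $\Delta C$ is the set of all non-empty subsets of $C$. The MCF is $K^m:=\bigcup_{l\le m}\bigcup_{C\in\mathcal{P}^l}\Delta C$. For $m\le M$ let $A(m)=\{(m',i): m'\le m,\ 1\le i\le\#\mathcal{P}^{m'}\}$ and let $C_{(m',i)}$ be the $i$-th cluster of $\mathcal{P}^{m'}$ (for a fixed enumeration of the clusters of each partition). The Multiscale Clustering Nerve $N^m$ is the nerve of the family $(C_\alpha)_{\alpha\in A(m)}$: the abstract simplicial complex on vertex set $A(m)$ whose simplices are the non-empty $S\subseteq A(m)$ with $\bigcap_{\alpha\in S}C_\alpha\neq\emptyset$; thus $N^m\subseteq N^{m+p}$. Homology is simplicial homology over a field, and $H_k^p(F^m)$ denotes the image of the map $H_k(F^m)\to H_k(F^{m+p})$ induced by inclusion, for $F=K$ or $F=N$. *)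

theory Defs
  imports Main "HOL-Library.Product_Lexorder"
begin

text \<open>An abstract simplicial complex is a set of non-empty finite vertex sets.
  The k-simplices are those with k+1 vertices.  Orientation of simplices is
  induced by the linear order on the vertex type.\<close>

definition simplices :: "'v set set \<Rightarrow> nat \<Rightarrow> 'v set set" where
  "simplices K k = {\<sigma> \<in> K. card \<sigma> = Suc k}"

definition chains :: "'v set set \<Rightarrow> nat \<Rightarrow> ('v set \<Rightarrow> 'f::field) set" where
  "chains K k = {c. \<forall>\<sigma>. c \<sigma> \<noteq> 0 \<longrightarrow> \<sigma> \<in> simplices K k}"

text \<open>Boundary map from k-chains to (k-1)-chains; the boundary of 0-chains is 0
  (unreduced homology).  The face of \<sigma> obtained by deleting the vertex v
  carries the sign (-1)^(number of vertices of \<sigma> below v).\<close>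
definition boundary :: "'v::linorder set set \<Rightarrow> nat \<Rightarrow> ('v set \<Rightarrow> 'f::field) \<Rightarrow> ('v set \<Rightarrow> 'f)" where
  "boundary K k c = (\<lambda>\<tau>. if \<tau> \<in> K \<and> card \<tau> = k then
      (\<Sum>\<sigma> \<in> {\<sigma> \<in> simplices K k. \<tau> \<subseteq> \<sigma>}.
          (- 1) ^ card {u \<in> \<sigma>. u < the_elem (\<sigma> - \<tau>)} * c \<sigma>)
    else 0)"

definition cycles :: "'v::linorder set set \<Rightarrow> nat \<Rightarrow> ('v set \<Rightarrow> 'f::field) set" where
  "cycles K k = {c \<in> chains K k. boundary K k c = (\<lambda>_. 0)}"

definition boundaries :: "'v::linorder set set \<Rightarrow> nat \<Rightarrow> ('v set \<Rightarrow> 'f::field) set" where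
  "boundaries K k = boundary K (Suc k) ` chains K (Suc k)"

definition coset :: "('v set \<Rightarrow> 'f::field) set \<Rightarrow> ('v set \<Rightarrow> 'f) \<Rightarrow> ('v set \<Rightarrow> 'f) set" where
  "coset B z = (\<lambda>b. (\<lambda>x. z x + b x)) ` B"

text \<open>Persistent homology H_k^p for K \<subseteq> L: the image of H_k(K) \<rightarrow> H_k(L), i.e. the
  set of classes [z] \<in> H_k(L) = Z_k(L)/B_k(L) of cycles z of K.  Its vector space
  structure is the one inherited from H_k(L) (coset arithmetic).\<close>
definition pers_homology :: "'v::linorder set set \<Rightarrow> 'v set set \<Rightarrow> nat \<Rightarrow> ('v set \<Rightarrow> 'f::field) set set" where
  "pers_homology K L k = coset (boundaries L k) ` cycles K k"

definition coset_lincomb :: "'f::field \<Rightarrow> ('w \<Rightarrow> 'f) set \<Rightarrow> ('w \<Rightarrow> 'f) set \<Rightarrow> ('w \<Rightarrow> 'f) set" where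
  "coset_lincomb a U V = {(\<lambda>x. a * u x + v x) | u v. u \<in> U \<and> v \<in> V}"

definition quot_iso ::
  "('v set \<Rightarrow> 'f::field) set set \<Rightarrow> ('w set \<Rightarrow> 'f) set set \<Rightarrow> bool" (infix "\<cong>\<^sub>Q" 50) where
  "Q1 \<cong>\<^sub>Q Q2 \<longleftrightarrow> (\<exists>\<phi>. bij_betw \<phi> Q1 Q2 \<and>
      (\<forall>a U V. U \<in> Q1 \<longrightarrow> V \<in> Q1 \<longrightarrow>
          \<phi> (coset_lincomb a U V) = coset_lincomb a (\<phi> U) (\<phi> V)))"

text \<open>Partitions P^1..P^M are given by enumerations: C m i is the i-th cluster
  of P^m, 1 \<le> i \<le> n m, where n m = #P^m.\<close>
definition enum_partition :: "'a set \<Rightarrow> nat \<Rightarrow> (nat \<Rightarrow> 'a set) \<Rightarrow> bool" where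
  "enum_partition X N C \<longleftrightarrow>
     (\<forall>i \<in> {1..N}. C i \<noteq> {}) \<and>
     (\<forall>i \<in> {1..N}. \<forall>j \<in> {1..N}. i \<noteq> j \<longrightarrow> C i \<inter> C j = {}) \<and>
     (\<Union>i \<in> {1..N}. C i) = X"

definition MCF :: "(nat \<Rightarrow> nat) \<Rightarrow> (nat \<Rightarrow> nat \<Rightarrow> 'a set) \<Rightarrow> nat \<Rightarrow> 'a set set" where
  "MCF n C m = (\<Union>l \<in> {1..m}. \<Union>i \<in> {1..n l}. {S. S \<noteq> {} \<and> S \<subseteq> C l i})"

definition index_set :: "(nat \<Rightarrow> nat) \<Rightarrow> nat \<Rightarrow> (nat \<times> nat) set" where
  "index_set n m = {(m', i). 1 \<le> m' \<and> m' \<le> m \<and> 1 \<le> i \<and> i \<le> n m'}"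

definition MCN :: "(nat \<Rightarrow> nat) \<Rightarrow> (nat \<Rightarrow> nat \<Rightarrow> 'a set) \<Rightarrow> nat \<Rightarrow> (nat \<times> nat) set set" where
  "MCN n C m = {S. S \<noteq> {} \<and> S \<subseteq> index_set n m \<and>
                   (\<Inter>\<alpha> \<in> S. C (fst \<alpha>) (snd \<alpha>)) \<noteq> {}}"

end

theory Submission
  imports Defs "HOL-Library.Option_ord"
begin

text \<open>Both filtrations are Dowker complexes of the relation "point \<open>x\<close> lies in cluster \<open>C\<close>" of level
  at most \<open>m\<close>, read from the two sides: points span a simplex of \<open>K\<^sup>m\<close> iff some cluster contains them
  all, and clusters span a simplex of \<open>N\<^sup>m\<close> iff some point lies in all of them. Both Dowker
  complexes sit in the rectangle complex of the relation, whose simplices are sets of points and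
  clusters each point of which lies in each cluster. Admitting the clusters one at a time, each
  step attaches a cone over the full simplex on the cluster's points, which is acyclic; so both
  inclusions are homology isomorphisms. They are natural in the relation, and the relations for
  \<open>m\<close> and \<open>m + p\<close> are nested, so they induce isomorphisms of the persistent homology groups.\<close>

section \<open>Simplicial chains\<close>

definition simplicial_complex :: "'v set set \<Rightarrow> bool" where
  "simplicial_complex K \<longleftrightarrow> finite K \<and> (\<forall>\<sigma>\<in>K. finite \<sigma> \<and> \<sigma> \<noteq> {}) \<and>
     (\<forall>\<sigma>\<in>K. \<forall>\<tau>. \<tau> \<subseteq> \<sigma> \<longrightarrow> \<tau> \<noteq> {} \<longrightarrow> \<tau> \<in> K)"

lemma simplicial_complexD:
  assumes "simplicial_complex K"
  shows "finite K" "\<sigma> \<in> K \<Longrightarrow> finite \<sigma>" "\<sigma> \<in> K \<Longrightarrow> \<sigma> \<noteq> {}"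
    "\<sigma> \<in> K \<Longrightarrow> \<tau> \<subseteq> \<sigma> \<Longrightarrow> \<tau> \<noteq> {} \<Longrightarrow> \<tau> \<in> K"
  using assms unfolding simplicial_complex_def by blast+

lemma chains_lincomb:
  assumes "c \<in> chains K k" "d \<in> chains K k"
  shows "(\<lambda>x. a * c x + d x) \<in> chains K k"
proof -
  have "\<And>\<sigma>. a * c \<sigma> + d \<sigma> \<noteq> 0 \<Longrightarrow> c \<sigma> \<noteq> 0 \<or> d \<sigma> \<noteq> 0" by auto
  then show ?thesis using assms unfolding chains_def by blast
qed

lemma chains_zero [simp]: "(\<lambda>_. 0) \<in> chains K k"
  unfolding chains_def by auto

lemma chains_uminus: "c \<in> chains K k \<Longrightarrow> (\<lambda>x. - c x) \<in> chains K k"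
  unfolding chains_def by auto

lemma chains_add: "c \<in> chains K k \<Longrightarrow> d \<in> chains K k \<Longrightarrow> (\<lambda>x. c x + d x) \<in> chains K k"
  using chains_lincomb[of c K k d 1] by simp

lemma chains_mono: "K \<subseteq> L \<Longrightarrow> c \<in> chains K k \<Longrightarrow> c \<in> chains L k"
  unfolding chains_def simplices_def by auto

lemma chains_outside: "c \<in> chains K k \<Longrightarrow> \<sigma> \<notin> K \<Longrightarrow> c \<sigma> = 0"
  unfolding chains_def simplices_def by auto

definition incidence_sum :: "'v::linorder set set \<Rightarrow> nat \<Rightarrow> ('v set \<Rightarrow> 'f::field) \<Rightarrow> 'v set \<Rightarrow> 'f" where
  "incidence_sum K k c \<tau> =
     (\<Sum>\<sigma> \<in> {\<sigma> \<in> simplices K k. \<tau> \<subseteq> \<sigma>}. (- 1) ^ card {u \<in> \<sigma>. u < the_elem (\<sigma> - \<tau>)} * c \<sigma>)"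

lemma boundary_eq_incidence_sum:
  "boundary K k c \<tau> = (if \<tau> \<in> K \<and> card \<tau> = k then incidence_sum K k c \<tau> else 0)"
  unfolding boundary_def incidence_sum_def ..

lemma boundary_lincomb:
  "boundary K k (\<lambda>x. a * c x + d x) = (\<lambda>x. a * boundary K k c x + boundary K k d x)"
  unfolding boundary_def
  by (auto simp: fun_eq_iff sum_distrib_left sum.distrib algebra_simps)

lemma boundary_zero [simp]: "boundary K k (\<lambda>_. 0) = (\<lambda>_. 0)"
  unfolding boundary_def by auto

lemma boundary_scale: "boundary K k (\<lambda>x. a * c x) = (\<lambda>x. a * boundary K k c x)"
  using boundary_lincomb[of K k a c "\<lambda>_. 0"] by simp

lemma boundary_add: "boundary K k (\<lambda>x. c x + d x) = (\<lambda>x. boundary K k c x + boundary K k d x)"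
  using boundary_lincomb[of K k 1 c d] by simp

lemma boundary_uminus: "boundary K k (\<lambda>x. - c x) = (\<lambda>x. - boundary K k c x)"
  using boundary_scale[of K k "-1" c] by simp

lemma boundary_outside: "\<tau> \<notin> K \<Longrightarrow> boundary K k c \<tau> = 0"
  unfolding boundary_def by auto

lemma boundary_degree_0:
  assumes "simplicial_complex K"
  shows "boundary K 0 c = (\<lambda>_. 0)"
  using simplicial_complexD[OF assms] unfolding boundary_def by (auto simp: fun_eq_iff)

lemma boundary_subcomplex:
  assumes K: "simplicial_complex K" and L: "simplicial_complex L" and "K \<subseteq> L"
    and c: "c \<in> chains K k"
  shows "boundary L k c = boundary K k c"
proof
  fix \<tau>
  show "boundary L k c \<tau> = boundary K k c \<tau>"
  proof (cases "\<tau> \<in> K")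
    case True
    have "incidence_sum L k c \<tau> = incidence_sum K k c \<tau>"
      unfolding incidence_sum_def using assms simplicial_complexD(1)[OF L] chains_outside[OF c]
      by (intro sum.mono_neutral_right) (auto simp: simplices_def)
    then show ?thesis using True \<open>K \<subseteq> L\<close> by (auto simp: boundary_eq_incidence_sum)
  next
    case False
    have "c \<sigma> = 0" if "\<tau> \<subseteq> \<sigma>" "\<tau> \<noteq> {}" for \<sigma>
      using that False simplicial_complexD(4)[OF K] chains_outside[OF c] by blast
    then have "incidence_sum L k c \<tau> = 0" if "\<tau> \<in> L"
      using that simplicial_complexD(3)[OF L] unfolding incidence_sum_def by (auto intro!: sum.neutral)
    then show ?thesis using False by (simp add: boundary_eq_incidence_sum)
  qed
qed

lemma cycles_lincomb:
  "c \<in> cycles K k \<Longrightarrow> d \<in> cycles K k \<Longrightarrow> (\<lambda>x. a * c x + d x) \<in> cycles K k"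
  unfolding cycles_def by (simp add: chains_lincomb boundary_lincomb)

lemma cycles_diff: "c \<in> cycles K k \<Longrightarrow> d \<in> cycles K k \<Longrightarrow> (\<lambda>x. c x - d x) \<in> cycles K k"
  using cycles_lincomb[of d K k c "-1"] by simp

lemma cycles_mono:
  assumes "simplicial_complex K" "simplicial_complex L" "K \<subseteq> L"
  shows "cycles K k \<subseteq> cycles L k"
  using boundary_subcomplex[OF assms] chains_mono[OF assms(3)] unfolding cycles_def by auto

lemma boundaries_lincomb:
  assumes "b \<in> boundaries K k" "b' \<in> boundaries K k"
  shows "(\<lambda>x. a * b x + b' x) \<in> boundaries K k"
proof -
  obtain c c' where "c \<in> chains K (Suc k)" "c' \<in> chains K (Suc k)"
    "b = boundary K (Suc k) c" "b' = boundary K (Suc k) c'"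
    using assms unfolding boundaries_def by auto
  then show ?thesis unfolding boundaries_def
    by (intro image_eqI[where x="\<lambda>x. a * c x + c' x"]) (simp_all add: boundary_lincomb chains_lincomb)
qed

lemma boundaries_zero [simp]: "(\<lambda>_. 0) \<in> boundaries K k"
  unfolding boundaries_def by (rule image_eqI[where x="\<lambda>_. 0"]) simp_all

lemma boundaries_add:
  "b \<in> boundaries K k \<Longrightarrow> b' \<in> boundaries K k \<Longrightarrow> (\<lambda>x. b x + b' x) \<in> boundaries K k"
  using boundaries_lincomb[of b K k b' 1] by simp

lemma boundaries_mono:
  assumes "simplicial_complex K" "simplicial_complex L" "K \<subseteq> L"
  shows "boundaries K k \<subseteq> boundaries L k"
  using boundary_subcomplex[OF assms] chains_mono[OF assms(3)] unfolding boundaries_def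
  by (auto intro!: image_eqI)

lemma homologous_trans:
  assumes "(\<lambda>x. z x - z' x) \<in> boundaries L k" "(\<lambda>x. z' x - z'' x) \<in> boundaries L k"
  shows "(\<lambda>x. z x - z'' x) \<in> boundaries L k"
  using boundaries_add[OF assms] by simp

section \<open>Isomorphisms of persistent homology\<close>

lemma coset_eq_iff:
  assumes lincomb: "\<And>a b b'. b \<in> B \<Longrightarrow> b' \<in> B \<Longrightarrow> (\<lambda>x. a * b x + b' x) \<in> B"
    and zero: "(\<lambda>_. 0) \<in> B"
  shows "coset B z1 = coset B z2 \<longleftrightarrow> (\<lambda>x. z1 x - z2 x) \<in> B"
proof
  assume "coset B z1 = coset B z2"
  moreover have "z1 \<in> coset B z1" unfolding coset_def by (rule image_eqI[OF _ zero]) simp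
  ultimately obtain b where "b \<in> B" "z1 = (\<lambda>x. z2 x + b x)" unfolding coset_def by auto
  then show "(\<lambda>x. z1 x - z2 x) \<in> B" by simp
next
  have sub: "coset B z \<subseteq> coset B z'" if d: "(\<lambda>x. z x - z' x) \<in> B" for z z'
  proof
    fix w assume "w \<in> coset B z"
    then obtain b where b: "b \<in> B" "w = (\<lambda>x. z x + b x)" unfolding coset_def by auto
    then show "w \<in> coset B z'" unfolding coset_def
      by (intro rev_image_eqI[OF lincomb[OF d b(1), of 1]]) auto
  qed
  assume d: "(\<lambda>x. z1 x - z2 x) \<in> B"
  have "(\<lambda>x. z2 x - z1 x) = (\<lambda>x. (- 1) * (z1 x - z2 x) + 0)" by auto
  then have "(\<lambda>x. z2 x - z1 x) \<in> B" using lincomb[OF d zero, of "- 1"] by simp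
  then show "coset B z1 = coset B z2" using sub d by blast
qed

lemma coset_lincomb_coset:
  assumes lincomb: "\<And>b b'. b \<in> B \<Longrightarrow> b' \<in> B \<Longrightarrow> (\<lambda>x. a * b x + b' x) \<in> B"
    and zero: "(\<lambda>_. 0) \<in> B"
  shows "coset_lincomb a (coset B z1) (coset B z2) = coset B (\<lambda>x. a * z1 x + z2 x)"
proof
  show "coset_lincomb a (coset B z1) (coset B z2) \<subseteq> coset B (\<lambda>x. a * z1 x + z2 x)"
  proof
    fix w assume "w \<in> coset_lincomb a (coset B z1) (coset B z2)"
    then obtain b1 b2 where b: "b1 \<in> B" "b2 \<in> B" "w = (\<lambda>x. a * (z1 x + b1 x) + (z2 x + b2 x))"
      unfolding coset_lincomb_def coset_def by auto
    then show "w \<in> coset B (\<lambda>x. a * z1 x + z2 x)" unfolding coset_def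
      by (intro rev_image_eqI[OF lincomb[OF b(1,2)]]) (auto simp: algebra_simps)
  qed
next
  show "coset B (\<lambda>x. a * z1 x + z2 x) \<subseteq> coset_lincomb a (coset B z1) (coset B z2)"
  proof
    fix w assume "w \<in> coset B (\<lambda>x. a * z1 x + z2 x)"
    then obtain b where b: "b \<in> B" "w = (\<lambda>x. a * z1 x + z2 x + b x)" unfolding coset_def by auto
    then have "w = (\<lambda>x. a * (z1 x + 0) + (z2 x + b x))" by (simp add: algebra_simps)
    moreover have "(\<lambda>x. z1 x + 0) \<in> coset B z1" unfolding coset_def by (rule image_eqI[OF _ zero]) simp
    moreover have "(\<lambda>x. z2 x + b x) \<in> coset B z2" using b unfolding coset_def by blast
    ultimately show "w \<in> coset_lincomb a (coset B z1) (coset B z2)"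
      unfolding coset_lincomb_def
      by (intro CollectI exI[of _ "\<lambda>x. z1 x + 0"] exI[of _ "\<lambda>x. z2 x + b x"]) simp
  qed
qed

lemma coset_boundaries_eq_iff:
  "coset (boundaries L k) z1 = coset (boundaries L k) z2 \<longleftrightarrow> (\<lambda>x. z1 x - z2 x) \<in> boundaries L k"
  by (rule coset_eq_iff) (auto intro: boundaries_lincomb)

lemma coset_lincomb_boundaries:
  "coset_lincomb a (coset (boundaries L k) z1) (coset (boundaries L k) z2)
     = coset (boundaries L k) (\<lambda>x. a * z1 x + z2 x)"
  by (rule coset_lincomb_coset) (auto intro: boundaries_lincomb)

lemma pers_homology_lincomb_closed:
  assumes "U \<in> pers_homology K L k" "V \<in> pers_homology K L k"
  shows "coset_lincomb a U V \<in> pers_homology K L k"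
  using assms unfolding pers_homology_def by (auto simp: coset_lincomb_boundaries cycles_lincomb)

lemma quot_iso_trans [trans]:
  assumes "Q1 \<cong>\<^sub>Q Q2" "Q2 \<cong>\<^sub>Q Q3"
  shows "Q1 \<cong>\<^sub>Q Q3"
proof -
  obtain \<phi> where \<phi>: "bij_betw \<phi> Q1 Q2" "\<forall>a U V. U \<in> Q1 \<longrightarrow> V \<in> Q1 \<longrightarrow>
      \<phi> (coset_lincomb a U V) = coset_lincomb a (\<phi> U) (\<phi> V)"
    using assms(1) unfolding quot_iso_def by blast
  obtain \<psi> where \<psi>: "bij_betw \<psi> Q2 Q3" "\<forall>a U V. U \<in> Q2 \<longrightarrow> V \<in> Q2 \<longrightarrow>
      \<psi> (coset_lincomb a U V) = coset_lincomb a (\<psi> U) (\<psi> V)"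
    using assms(2) unfolding quot_iso_def by blast
  have "\<psi> (\<phi> (coset_lincomb a U V)) = coset_lincomb a (\<psi> (\<phi> U)) (\<psi> (\<phi> V))"
    if "U \<in> Q1" "V \<in> Q1" for a U V
    using that \<phi> \<psi>(2) bij_betwE by fastforce
  then show ?thesis
    unfolding quot_iso_def using bij_betw_trans[OF \<phi>(1) \<psi>(1)] by (auto intro!: exI[of _ "\<psi> \<circ> \<phi>"])
qed

lemma quot_iso_sym:
  assumes "Q1 \<cong>\<^sub>Q Q2"
    and closed: "\<And>a U V. U \<in> Q1 \<Longrightarrow> V \<in> Q1 \<Longrightarrow> coset_lincomb a U V \<in> Q1"
  shows "Q2 \<cong>\<^sub>Q Q1"
proof -
  obtain \<phi> where \<phi>: "bij_betw \<phi> Q1 Q2" "\<forall>a U V. U \<in> Q1 \<longrightarrow> V \<in> Q1 \<longrightarrow>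
      \<phi> (coset_lincomb a U V) = coset_lincomb a (\<phi> U) (\<phi> V)"
    using assms(1) unfolding quot_iso_def by blast
  define \<psi> where "\<psi> = the_inv_into Q1 \<phi>"
  have \<psi>: "bij_betw \<psi> Q2 Q1" unfolding \<psi>_def using \<phi>(1) by (rule bij_betw_the_inv_into)
  have inv: "\<psi> U \<in> Q1" "\<phi> (\<psi> U) = U" if "U \<in> Q2" for U
    using bij_betwE[OF \<psi>] that f_the_inv_into_f_bij_betw[OF \<phi>(1)] unfolding \<psi>_def by auto
  have "\<psi> (coset_lincomb a U V) = coset_lincomb a (\<psi> U) (\<psi> V)" if "U \<in> Q2" "V \<in> Q2" for a U V
  proof -
    have "\<phi> (coset_lincomb a (\<psi> U) (\<psi> V)) = coset_lincomb a U V"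
      using \<phi>(2) inv that by simp
    then show ?thesis
      unfolding \<psi>_def using the_inv_into_f_f[OF bij_betw_imp_inj_on[OF \<phi>(1)]] closed inv that
      by metis
  qed
  then show ?thesis using \<psi> unfolding quot_iso_def by blast
qed

text \<open>For \<open>K \<subseteq> L\<close>, the two clauses say that \<open>H\<^sub>k(K) \<rightarrow> H\<^sub>k(L)\<close> is onto and one-to-one for every \<open>k\<close>.\<close>

definition incl_homology_iso :: "'v::linorder set set \<Rightarrow> 'v set set \<Rightarrow> 'f::field itself \<Rightarrow> bool" where
  "incl_homology_iso K L T \<longleftrightarrow>
     (\<forall>k (z :: 'v set \<Rightarrow> 'f). z \<in> cycles L k \<longrightarrow>
        (\<exists>z'\<in>cycles K k. (\<lambda>x. z x - z' x) \<in> boundaries L k)) \<and>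
     (\<forall>k (z :: 'v set \<Rightarrow> 'f). z \<in> cycles K k \<longrightarrow> z \<in> boundaries L k \<longrightarrow> z \<in> boundaries K k)"

lemma incl_homology_isoI:
  assumes "\<And>k (z :: 'v::linorder set \<Rightarrow> 'f::field). z \<in> cycles L k \<Longrightarrow>
      \<exists>z'\<in>cycles K k. (\<lambda>x. z x - z' x) \<in> boundaries L k"
    and "\<And>k (z :: 'v set \<Rightarrow> 'f). z \<in> cycles K k \<Longrightarrow> z \<in> boundaries L k \<Longrightarrow> z \<in> boundaries K k"
  shows "incl_homology_iso K L TYPE('f)"
  using assms unfolding incl_homology_iso_def by blast

lemma incl_homology_isoD:
  fixes z :: "'v::linorder set \<Rightarrow> 'f::field"
  assumes "incl_homology_iso K L TYPE('f)"
  shows "z \<in> cycles L k \<Longrightarrow> \<exists>z'\<in>cycles K k. (\<lambda>x. z x - z' x) \<in> boundaries L k"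
    and "z \<in> cycles K k \<Longrightarrow> z \<in> boundaries L k \<Longrightarrow> z \<in> boundaries K k"
  using assms unfolding incl_homology_iso_def by blast+

lemma incl_homology_iso_refl:
  fixes K :: "'v::linorder set set"
  shows "incl_homology_iso K K TYPE('f::field)"
proof (rule incl_homology_isoI)
  fix k and z :: "'v set \<Rightarrow> 'f" assume "z \<in> cycles K k"
  then show "\<exists>z'\<in>cycles K k. (\<lambda>x. z x - z' x) \<in> boundaries K k" by (intro bexI[of _ z]) simp_all
qed simp

lemma incl_homology_iso_trans:
  assumes K: "simplicial_complex K" and L: "simplicial_complex L" and M: "simplicial_complex M"
    and "K \<subseteq> L" "L \<subseteq> M"
    and KL: "incl_homology_iso K L TYPE('f::field)" and LM: "incl_homology_iso L M TYPE('f)"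
  shows "incl_homology_iso K M TYPE('f)"
proof (rule incl_homology_isoI)
  fix k and z :: "'a set \<Rightarrow> 'f"
  assume "z \<in> cycles M k"
  then obtain z1 where z1: "z1 \<in> cycles L k" "(\<lambda>x. z x - z1 x) \<in> boundaries M k"
    using incl_homology_isoD(1)[OF LM] by blast
  then obtain z2 where z2: "z2 \<in> cycles K k" "(\<lambda>x. z1 x - z2 x) \<in> boundaries L k"
    using incl_homology_isoD(1)[OF KL] by blast
  then have "(\<lambda>x. z1 x - z2 x) \<in> boundaries M k" using boundaries_mono[OF L M \<open>L \<subseteq> M\<close>] by auto
  then show "\<exists>z'\<in>cycles K k. (\<lambda>x. z x - z' x) \<in> boundaries M k"
    using z1 z2 homologous_trans by blast
next
  fix k and z :: "'a set \<Rightarrow> 'f"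
  assume "z \<in> cycles K k" "z \<in> boundaries M k"
  then show "z \<in> boundaries K k"
    using cycles_mono[OF K L \<open>K \<subseteq> L\<close>] incl_homology_isoD(2)[OF KL] incl_homology_isoD(2)[OF LM]
    by blast
qed

lemma coset_some_coset_boundaries:
  fixes z0 :: "'v::linorder set \<Rightarrow> 'f::field"
  assumes "boundaries K k \<subseteq> (boundaries L k :: ('v set \<Rightarrow> 'f) set)"
  shows "coset (boundaries L k) (SOME z. z \<in> coset (boundaries K k) z0) = coset (boundaries L k) z0"
proof -
  have "z0 \<in> coset (boundaries K k) z0" unfolding coset_def by (rule image_eqI[of _ _ "\<lambda>_. 0"]) simp_all
  then have "(SOME z. z \<in> coset (boundaries K k) z0) \<in> coset (boundaries K k) z0"
    by (rule someI[of "\<lambda>z. z \<in> coset (boundaries K k) z0"])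
  then obtain b where b: "b \<in> boundaries K k" "(SOME z. z \<in> coset (boundaries K k) z0) = (\<lambda>x. z0 x + b x)"
    unfolding coset_def by auto
  have diff: "(\<lambda>x. (SOME z. z \<in> coset (boundaries K k) z0) x - z0 x) = b"
    unfolding b(2) by simp
  have "(\<lambda>x. (SOME z. z \<in> coset (boundaries K k) z0) x - z0 x) \<in> boundaries L k"
    unfolding diff using b(1) assms by blast
  then show ?thesis unfolding coset_boundaries_eq_iff .
qed

lemma coset_boundaries_eq_of_incl_homology_iso:
  fixes z1 :: "'v::linorder set \<Rightarrow> 'f::field"
  assumes "incl_homology_iso K L TYPE('f)" "z1 \<in> cycles K k" "z2 \<in> cycles K k"
    and "coset (boundaries L k) z1 = coset (boundaries L k) z2"
  shows "coset (boundaries K k) z1 = coset (boundaries K k) z2"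
  using assms cycles_diff incl_homology_isoD(2) unfolding coset_boundaries_eq_iff by blast

lemma pers_homology_iso_of_incl:
  assumes K: "simplicial_complex K" and K': "simplicial_complex K'"
    and L: "simplicial_complex L" and L': "simplicial_complex L'"
    and "K \<subseteq> K'" "L \<subseteq> L'" "K \<subseteq> L" "K' \<subseteq> L'"
    and KL: "incl_homology_iso K L TYPE('f::field)" and KL': "incl_homology_iso K' L' TYPE('f)"
  shows "(pers_homology K K' k :: ('v::linorder set \<Rightarrow> 'f) set set) \<cong>\<^sub>Q pers_homology L L' k"
proof -
  let ?BK = "boundaries K' k :: ('v set \<Rightarrow> 'f) set" and ?BL = "boundaries L' k :: ('v set \<Rightarrow> 'f) set"
  define \<phi> where "\<phi> U = coset ?BL (SOME z. z \<in> U)" for U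
  have \<phi>: "\<phi> (coset ?BK z) = coset ?BL z" for z
    unfolding \<phi>_def using coset_some_coset_boundaries[OF boundaries_mono[OF K' L' \<open>K' \<subseteq> L'\<close>]] .
  have "inj_on \<phi> (pers_homology K K' k)"
  proof (rule inj_onI)
    fix U V assume "U \<in> pers_homology K K' k" "V \<in> pers_homology K K' k" "\<phi> U = \<phi> V"
    then obtain z1 z2 where "z1 \<in> cycles K' k" "z2 \<in> cycles K' k" "U = coset ?BK z1" "V = coset ?BK z2"
      "coset ?BL z1 = coset ?BL z2"
      using cycles_mono[OF K K' \<open>K \<subseteq> K'\<close>] unfolding pers_homology_def by (auto simp: \<phi>) blast
    then show "U = V" using coset_boundaries_eq_of_incl_homology_iso[OF KL'] by blast
  qed
  moreover have "\<phi> ` pers_homology K K' k = pers_homology L L' k"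
  proof
    show "\<phi> ` pers_homology K K' k \<subseteq> pers_homology L L' k"
      unfolding pers_homology_def image_image \<phi> by (intro image_mono cycles_mono K L \<open>K \<subseteq> L\<close>)
    show "pers_homology L L' k \<subseteq> \<phi> ` pers_homology K K' k"
    proof
      fix W :: "('v set \<Rightarrow> 'f) set" assume "W \<in> pers_homology L L' k"
      then obtain w where w: "w \<in> cycles L k" "W = coset ?BL w" unfolding pers_homology_def by auto
      then obtain z where z: "z \<in> cycles K k" "(\<lambda>x. w x - z x) \<in> boundaries L k"
        using incl_homology_isoD(1)[OF KL] by blast
      then have "(\<lambda>x. w x - z x) \<in> ?BL" using boundaries_mono[OF L L' \<open>L \<subseteq> L'\<close>] by blast
      then have "W = \<phi> (coset ?BK z)" using w(2) \<phi> coset_boundaries_eq_iff by metis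
      then show "W \<in> \<phi> ` pers_homology K K' k" using z(1) unfolding pers_homology_def by blast
    qed
  qed
  moreover have "\<phi> (coset_lincomb a U V) = coset_lincomb a (\<phi> U) (\<phi> V)"
    if U: "U \<in> pers_homology K K' k" and V: "V \<in> pers_homology K K' k" for a U V
  proof -
    obtain z1 z2 where "U = coset ?BK z1" "V = coset ?BK z2"
      using U V unfolding pers_homology_def by blast
    then show ?thesis by (simp only: \<phi> coset_lincomb_boundaries)
  qed
  ultimately show ?thesis unfolding quot_iso_def bij_betw_def by (intro exI[of _ \<phi>]) blast
qed

lemma chain_map_cycles_boundaries:
  fixes F :: "('v::linorder set \<Rightarrow> 'f::field) \<Rightarrow> ('w::linorder set \<Rightarrow> 'f)"
  assumes "inj F" and zero: "F (\<lambda>_. 0) = (\<lambda>_. 0)"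
    and commute: "\<And>c k. F (boundary K k c) = boundary K' k (F c)"
    and onto: "\<And>k. F ` chains K k = chains K' k"
  shows "F ` cycles K k = cycles K' k" "F ` boundaries K k = boundaries K' k"
proof -
  have cycle_iff: "boundary K' k (F c) = (\<lambda>_. 0) \<longleftrightarrow> boundary K k c = (\<lambda>_. 0)" for c
    unfolding commute[symmetric] zero[symmetric] using \<open>inj F\<close> by (rule inj_eq)
  show "F ` cycles K k = cycles K' k"
  proof
    show "F ` cycles K k \<subseteq> cycles K' k"
      using onto cycle_iff unfolding cycles_def by auto
    show "cycles K' k \<subseteq> F ` cycles K k"
    proof
      fix d :: "'w set \<Rightarrow> 'f" assume d: "d \<in> cycles K' k"
      then obtain c where "c \<in> chains K k" "d = F c"
        using onto[of k] unfolding cycles_def by blast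
      then show "d \<in> F ` cycles K k" using d cycle_iff unfolding cycles_def by auto
    qed
  qed
  show "F ` boundaries K k = boundaries K' k"
    unfolding boundaries_def image_image commute onto[symmetric, of "Suc k"] by simp
qed

lemma pers_homology_iso_of_chain_map:
  fixes F :: "('v::linorder set \<Rightarrow> 'f::field) \<Rightarrow> ('w::linorder set \<Rightarrow> 'f)"
  assumes "inj F" and lin: "\<And>a u v. F (\<lambda>x. a * u x + v x) = (\<lambda>x. a * F u x + F v x)"
    and cycles: "F ` cycles K k = cycles L k" and boundaries: "F ` boundaries K' k = boundaries L' k"
  shows "(pers_homology K K' k :: ('v set \<Rightarrow> 'f) set set) \<cong>\<^sub>Q
    (pers_homology L L' k :: ('w set \<Rightarrow> 'f) set set)"
proof -
  have coset: "F ` coset B z = coset (F ` B) (F z)" for B z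
    unfolding coset_def image_image using lin[of 1 z] by simp
  have lincomb: "F ` coset_lincomb a U V = coset_lincomb a (F ` U) (F ` V)" for a U V
  proof
    show "F ` coset_lincomb a U V \<subseteq> coset_lincomb a (F ` U) (F ` V)"
      unfolding coset_lincomb_def using lin by blast
    show "coset_lincomb a (F ` U) (F ` V) \<subseteq> F ` coset_lincomb a U V"
    proof
      fix w assume "w \<in> coset_lincomb a (F ` U) (F ` V)"
      then obtain u v where "u \<in> U" "v \<in> V" "w = (\<lambda>x. a * F u x + F v x)"
        unfolding coset_lincomb_def by blast
      then show "w \<in> F ` coset_lincomb a U V" unfolding coset_lincomb_def
        by (intro image_eqI[where x="\<lambda>x. a * u x + v x"]) (auto simp: lin)
    qed
  qed
  have "bij_betw ((`) F) (pers_homology K K' k) (pers_homology L L' k)"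
  proof (rule bij_betw_imageI)
    show "inj_on ((`) F) (pers_homology K K' k)"
      using \<open>inj F\<close> by (simp add: inj_on_def inj_image_eq_iff)
    show "(`) F ` pers_homology K K' k = pers_homology L L' k"
      unfolding pers_homology_def image_image coset boundaries cycles[symmetric] by auto
  qed
  then show ?thesis unfolding quot_iso_def using lincomb by blast
qed

section \<open>Cones\<close>

definition augmentation :: "'v set set \<Rightarrow> ('v set \<Rightarrow> 'f::field) \<Rightarrow> 'f" where
  "augmentation A c = (\<Sum>\<sigma>\<in>simplices A 0. c \<sigma>)"

lemma incidence_sum_empty: "incidence_sum A 0 c {} = augmentation A c"
proof -
  have vertex: "(- 1) ^ card {u \<in> \<sigma>. u < the_elem \<sigma>} * c \<sigma> = c \<sigma>" if "\<sigma> \<in> simplices A 0" for \<sigma>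
  proof -
    obtain w where "\<sigma> = {w}" using \<open>\<sigma> \<in> simplices A 0\<close> by (auto simp: simplices_def card_Suc_eq)
    then have "{u \<in> \<sigma>. u < the_elem \<sigma>} = {}" by auto
    then show ?thesis by (simp only: card.empty power_0 mult_1_left)
  qed
  have "incidence_sum A 0 c {} = (\<Sum>\<sigma> \<in> simplices A 0. (- 1) ^ card {u \<in> \<sigma>. u < the_elem \<sigma>} * c \<sigma>)"
    unfolding incidence_sum_def by simp
  also have "\<dots> = augmentation A c"
    unfolding augmentation_def by (rule sum.cong[OF refl vertex])
  finally show ?thesis .
qed

text \<open>Vanishing reduced homology over \<open>'f\<close>.\<close>

definition acyclic_complex :: "'v::linorder set set \<Rightarrow> 'f::field itself \<Rightarrow> bool" where
  "acyclic_complex A T \<longleftrightarrow> A \<noteq> {} \<and>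
     (\<forall>(c :: 'v set \<Rightarrow> 'f). c \<in> chains A 0 \<longrightarrow> augmentation A c = 0 \<longrightarrow> c \<in> boundaries A 0) \<and>
     (\<forall>k (c :: 'v set \<Rightarrow> 'f). c \<in> cycles A (Suc k) \<longrightarrow> c \<in> boundaries A (Suc k))"

text \<open>\<open>insert_sign v \<rho>\<close> is the sign of the face \<open>\<rho>\<close> in the boundary of \<open>insert v \<rho>\<close>.\<close>

definition insert_sign :: "'v::linorder \<Rightarrow> 'v set \<Rightarrow> 'f::field" where
  "insert_sign v \<rho> = (- 1) ^ card {u \<in> \<rho>. u < v}"

lemma insert_sign_square: "insert_sign v \<rho> * insert_sign v \<rho> = (1::'f::field)"
  unfolding insert_sign_def power_mult_distrib[symmetric] by simp

lemma insert_sign_nonzero: "insert_sign v \<rho> \<noteq> (0::'f::field)"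
  unfolding insert_sign_def by simp

lemma insert_sign_swap:
  assumes "finite \<rho>" "u \<notin> \<rho>" "v \<notin> \<rho>" "u \<noteq> v"
  shows "insert_sign u (insert v \<rho>) * insert_sign v (insert u \<rho>)
    = - (insert_sign v \<rho> * insert_sign u \<rho> :: 'f::field)"
proof -
  have card_insert_less: "card {w \<in> insert x \<rho>. w < y} = card {w \<in> \<rho>. w < y} + (if x < y then 1 else 0)"
    if "x \<notin> \<rho>" for x y
  proof (cases "x < y")
    case True
    then have "{w \<in> insert x \<rho>. w < y} = insert x {w \<in> \<rho>. w < y}" by auto
    then show ?thesis using True that assms(1) by simp
  next
    case False
    then have "{w \<in> insert x \<rho>. w < y} = {w \<in> \<rho>. w < y}" by auto
    then show ?thesis using False by simp
  qed
  show ?thesis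
    using assms unfolding insert_sign_def card_insert_less[OF \<open>u \<notin> \<rho>\<close>] card_insert_less[OF \<open>v \<notin> \<rho>\<close>]
    by (cases "u < v") (auto simp: power_add)
qed

definition cone :: "'v::linorder \<Rightarrow> ('v set \<Rightarrow> 'f::field) \<Rightarrow> ('v set \<Rightarrow> 'f)" where
  "cone v c = (\<lambda>\<sigma>. if v \<in> \<sigma> \<and> \<sigma> - {v} \<noteq> {} then insert_sign v (\<sigma> - {v}) * c (\<sigma> - {v}) else 0)"

lemma cone_scale: "cone v (\<lambda>x. a * c x) = (\<lambda>x. a * cone v c x)"
  unfolding cone_def by (auto simp: fun_eq_iff)

lemma cone_uminus: "cone v (\<lambda>x. - c x) = (\<lambda>x. - cone v c x)"
  unfolding cone_def by (auto simp: fun_eq_iff)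

definition base_part :: "'v \<Rightarrow> ('v set \<Rightarrow> 'f::field) \<Rightarrow> ('v set \<Rightarrow> 'f)" where
  "base_part v z = (\<lambda>\<sigma>. if v \<in> \<sigma> then 0 else z \<sigma>)"

definition link_part :: "'v::linorder \<Rightarrow> ('v set \<Rightarrow> 'f::field) \<Rightarrow> ('v set \<Rightarrow> 'f)" where
  "link_part v z = (\<lambda>\<rho>. if v \<notin> \<rho> \<and> \<rho> \<noteq> {} then insert_sign v \<rho> * z (insert v \<rho>) else 0)"

locale cone_extension =
  fixes K A L :: "'v::linorder set set" and v :: 'v
  assumes K: "simplicial_complex K" and A: "simplicial_complex A" and A_sub_K: "A \<subseteq> K"
    and apex_notin_K: "\<And>\<sigma>. \<sigma> \<in> K \<Longrightarrow> v \<notin> \<sigma>"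
    and L_eq: "L = K \<union> insert v ` A \<union> {{v}}"
begin

lemma mem_L_iff: "\<sigma> \<in> L \<longleftrightarrow> \<sigma> \<in> K \<or> (v \<in> \<sigma> \<and> (\<sigma> = {v} \<or> \<sigma> - {v} \<in> A))"
proof
  assume "\<sigma> \<in> L"
  then show "\<sigma> \<in> K \<or> (v \<in> \<sigma> \<and> (\<sigma> = {v} \<or> \<sigma> - {v} \<in> A))"
    unfolding L_eq using apex_notin_K A_sub_K by (auto simp: insert_Diff_if)
next
  assume "\<sigma> \<in> K \<or> (v \<in> \<sigma> \<and> (\<sigma> = {v} \<or> \<sigma> - {v} \<in> A))"
  then show "\<sigma> \<in> L" unfolding L_eq by (metis Un_iff image_eqI insert_Diff singletonI)
qed

lemma apex_notin_A: "\<sigma> \<in> A \<Longrightarrow> v \<notin> \<sigma>"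
  using apex_notin_K A_sub_K by auto

lemma K_sub_L: "K \<subseteq> L"
  unfolding L_eq by auto

lemma L: "simplicial_complex L"
  unfolding simplicial_complex_def
proof (intro conjI ballI allI impI)
  show "finite L" unfolding L_eq using simplicial_complexD(1)[OF K] simplicial_complexD(1)[OF A] by auto
next
  fix \<sigma> assume "\<sigma> \<in> L"
  then show "finite \<sigma>" "\<sigma> \<noteq> {}"
    unfolding L_eq using simplicial_complexD(2,3)[OF K] simplicial_complexD(2)[OF A] by auto
next
  fix \<sigma> \<tau> assume \<sigma>: "\<sigma> \<in> L" and \<tau>: "\<tau> \<subseteq> \<sigma>" "\<tau> \<noteq> {}"
  show "\<tau> \<in> L"
  proof (cases "\<sigma> \<in> K")
    case True
    then show ?thesis using simplicial_complexD(4)[OF K True \<tau>] K_sub_L by auto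
  next
    case False
    then have v: "v \<in> \<sigma>" "\<sigma> = {v} \<or> \<sigma> - {v} \<in> A" using \<sigma> mem_L_iff by auto
    show ?thesis
    proof (cases "v \<in> \<tau>")
      case True
      then have "\<tau> = {v} \<or> \<tau> - {v} \<in> A"
        using v \<tau> simplicial_complexD(4)[OF A, of "\<sigma> - {v}" "\<tau> - {v}"] by auto
      then show ?thesis using mem_L_iff True by auto
    next
      case False
      then have "\<tau> \<in> A" using v \<tau> simplicial_complexD(4)[OF A, of "\<sigma> - {v}" \<tau>] by auto
      then show ?thesis using A_sub_K K_sub_L by auto
    qed
  qed
qed

lemma cone_in_chains:
  assumes "c \<in> chains A k"
  shows "cone v c \<in> chains L (Suc k)"
  unfolding chains_def mem_Collect_eq
proof (intro allI impI)
  fix \<sigma> assume "cone v c \<sigma> \<noteq> 0"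
  then have "v \<in> \<sigma>" "c (\<sigma> - {v}) \<noteq> 0" unfolding cone_def by (auto split: if_splits)
  moreover have "\<sigma> - {v} \<in> simplices A k" using assms calculation(2) unfolding chains_def by auto
  moreover have "finite (\<sigma> - {v})" using simplicial_complexD(2)[OF A] calculation(3)
    unfolding simplices_def by blast
  ultimately show "\<sigma> \<in> simplices L (Suc k)"
    unfolding simplices_def using mem_L_iff by (auto simp: card_Suc_Diff1)
qed

lemma cone_incidence_term:
  assumes c: "c \<in> chains A k" and "v \<notin> \<tau>" "card \<tau> = Suc k" "\<tau> \<subseteq> \<sigma>"
  shows "(- 1) ^ card {u \<in> \<sigma>. u < the_elem (\<sigma> - \<tau>)} * cone v c \<sigma> = (if \<sigma> = insert v \<tau> then c \<tau> else 0)"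
proof (cases "\<sigma> = insert v \<tau>")
  case True
  have "\<tau> \<noteq> {}" using \<open>card \<tau> = Suc k\<close> by auto
  moreover have "insert v \<tau> - \<tau> = {v}" "insert v \<tau> - {v} = \<tau>" "{u \<in> insert v \<tau>. u < v} = {u \<in> \<tau>. u < v}"
    using \<open>v \<notin> \<tau>\<close> by auto
  ultimately show ?thesis
    using True insert_sign_square[of v \<tau>] unfolding cone_def insert_sign_def by (simp add: mult.assoc)
next
  case False
  have "cone v c \<sigma> = 0"
  proof (rule ccontr)
    assume "cone v c \<sigma> \<noteq> 0"
    then have "v \<in> \<sigma>" "c (\<sigma> - {v}) \<noteq> 0" unfolding cone_def by (auto split: if_splits)
    then have "\<sigma> - {v} \<in> A" "card (\<sigma> - {v}) = Suc k" using c unfolding chains_def simplices_def by auto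
    moreover have "finite (\<sigma> - {v})" using simplicial_complexD(2)[OF A] calculation(1) by blast
    moreover have "\<tau> \<subseteq> \<sigma> - {v}" using \<open>\<tau> \<subseteq> \<sigma>\<close> \<open>v \<notin> \<tau>\<close> by auto
    ultimately have "\<sigma> - {v} = \<tau>" using \<open>card \<tau> = Suc k\<close> by (metis card_subset_eq)
    then show False using False \<open>v \<in> \<sigma>\<close> by auto
  qed
  then show ?thesis using False by simp
qed

lemma boundary_cone_off_apex:
  assumes c: "c \<in> chains A k" and "v \<notin> \<tau>"
  shows "boundary L (Suc k) (cone v c) \<tau> = c \<tau>"
proof (cases "\<tau> \<in> L \<and> card \<tau> = Suc k")
  case True
  let ?S = "{\<sigma> \<in> simplices L (Suc k). \<tau> \<subseteq> \<sigma>}"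
  have "finite ?S" using simplicial_complexD(1)[OF L] unfolding simplices_def by auto
  have "incidence_sum L (Suc k) (cone v c) \<tau> = (\<Sum>\<sigma>\<in>?S. if \<sigma> = insert v \<tau> then c \<tau> else 0)"
    unfolding incidence_sum_def using True by (intro sum.cong refl cone_incidence_term[OF c \<open>v \<notin> \<tau>\<close>]) auto
  also have "\<dots> = (if insert v \<tau> \<in> ?S then c \<tau> else 0)"
    using \<open>finite ?S\<close> by (simp add: sum.delta')
  finally have "incidence_sum L (Suc k) (cone v c) \<tau> = (if insert v \<tau> \<in> ?S then c \<tau> else 0)" .
  moreover have "c \<tau> = 0" if "insert v \<tau> \<notin> ?S"
  proof (rule ccontr)
    assume "c \<tau> \<noteq> 0"
    then have "\<tau> \<in> A" "card \<tau> = Suc k" using c unfolding chains_def simplices_def by auto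
    moreover have "finite \<tau>" using \<open>\<tau> \<in> A\<close> simplicial_complexD(2)[OF A] by blast
    ultimately show False using that mem_L_iff \<open>v \<notin> \<tau>\<close> by (auto simp: simplices_def)
  qed
  ultimately show ?thesis using True by (auto simp: boundary_eq_incidence_sum)
next
  case False
  then have "c \<tau> = 0" using c K_sub_L A_sub_K unfolding chains_def simplices_def by auto
  then show ?thesis using False unfolding boundary_eq_incidence_sum by auto
qed

lemma cofaces_containing_apex:
  assumes "v \<in> \<tau>"
  shows "{\<sigma> \<in> simplices L (Suc k). \<tau> \<subseteq> \<sigma>} = insert v ` {\<sigma> \<in> simplices A k. \<tau> - {v} \<subseteq> \<sigma>}"
proof
  show "{\<sigma> \<in> simplices L (Suc k). \<tau> \<subseteq> \<sigma>} \<subseteq> insert v ` {\<sigma> \<in> simplices A k. \<tau> - {v} \<subseteq> \<sigma>}"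
  proof
    fix \<sigma> assume "\<sigma> \<in> {\<sigma> \<in> simplices L (Suc k). \<tau> \<subseteq> \<sigma>}"
    then have \<sigma>: "\<sigma> \<in> L" "card \<sigma> = Suc (Suc k)" "\<tau> \<subseteq> \<sigma>" unfolding simplices_def by auto
    then have "v \<in> \<sigma>" "finite \<sigma>" "\<sigma> \<noteq> {v}" using assms simplicial_complexD(2)[OF L] by auto
    then have "\<sigma> - {v} \<in> {\<sigma> \<in> simplices A k. \<tau> - {v} \<subseteq> \<sigma>}" "\<sigma> = insert v (\<sigma> - {v})"
      using \<sigma> mem_L_iff apex_notin_K unfolding simplices_def by auto
    then show "\<sigma> \<in> insert v ` {\<sigma> \<in> simplices A k. \<tau> - {v} \<subseteq> \<sigma>}" by blast
  qed
  show "insert v ` {\<sigma> \<in> simplices A k. \<tau> - {v} \<subseteq> \<sigma>} \<subseteq> {\<sigma> \<in> simplices L (Suc k). \<tau> \<subseteq> \<sigma>}"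
    using apex_notin_A simplicial_complexD(2)[OF A] mem_L_iff assms
    unfolding simplices_def by auto
qed

lemma cone_incidence_term_at_apex:
  fixes c :: "'v set \<Rightarrow> 'f::field"
  assumes "\<sigma> \<in> A" "\<sigma> - \<rho> = {u}" "\<rho> \<subseteq> \<sigma>"
  shows "(- 1) ^ card {w \<in> insert v \<sigma>. w < the_elem (insert v \<sigma> - insert v \<rho>)} * cone v c (insert v \<sigma>)
    = - insert_sign v \<rho> * ((- 1) ^ card {w \<in> \<sigma>. w < the_elem (\<sigma> - \<rho>)} * c \<sigma>)"
proof -
  have "finite \<sigma>" "v \<notin> \<sigma>" using assms(1) simplicial_complexD(2)[OF A] apex_notin_A by auto
  then have u: "\<sigma> = insert u \<rho>" "finite \<rho>" "u \<notin> \<rho>" "v \<notin> \<rho>" "u \<noteq> v"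
    using assms(2,3) finite_subset by auto
  have "insert v \<sigma> - insert v \<rho> = {u}" "insert v \<sigma> - {v} = \<sigma>" using u by auto
  moreover have "{w \<in> insert v \<sigma>. w < u} = {w \<in> insert v \<rho>. w < u}" "{w \<in> \<sigma>. w < u} = {w \<in> \<rho>. w < u}"
    using u by auto
  ultimately show ?thesis
    using insert_sign_swap[OF u(2,3,4,5), where 'f='f] u(1) assms(2)
    unfolding cone_def insert_sign_def by (simp add: algebra_simps)
qed

lemma boundary_cone_at_apex:
  fixes c :: "'v set \<Rightarrow> 'f::field"
  assumes c: "c \<in> chains A k" and "v \<in> \<tau>" "\<tau> \<in> L" "card \<tau> = Suc k"
  shows "boundary L (Suc k) (cone v c) \<tau> = - insert_sign v (\<tau> - {v}) * incidence_sum A k c (\<tau> - {v})"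
proof -
  define \<rho> where "\<rho> = \<tau> - {v}"
  have "finite \<tau>" using \<open>\<tau> \<in> L\<close> simplicial_complexD(2)[OF L] by blast
  then have \<rho>: "finite \<rho>" "\<tau> = insert v \<rho>" "card \<rho> = k"
    using \<open>v \<in> \<tau>\<close> \<open>card \<tau> = Suc k\<close> unfolding \<rho>_def by auto
  let ?T = "{\<sigma> \<in> simplices A k. \<rho> \<subseteq> \<sigma>}"
  have summand: "(- 1) ^ card {u \<in> insert v \<sigma>. u < the_elem (insert v \<sigma> - \<tau>)} * cone v c (insert v \<sigma>)
      = - insert_sign v \<rho> * ((- 1) ^ card {u \<in> \<sigma>. u < the_elem (\<sigma> - \<rho>)} * c \<sigma>)" if "\<sigma> \<in> ?T" for \<sigma>
  proof -
    have "\<sigma> \<in> A" "card \<sigma> = Suc k" "\<rho> \<subseteq> \<sigma>" using that unfolding simplices_def by auto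
    moreover have "finite \<sigma>" using \<open>\<sigma> \<in> A\<close> simplicial_complexD(2)[OF A] by blast
    ultimately have "card (\<sigma> - \<rho>) = 1" using \<rho>(1,3) by (simp add: card_Diff_subset)
    then obtain u where "\<sigma> - \<rho> = {u}" by (auto simp: card_Suc_eq)
    then show ?thesis using cone_incidence_term_at_apex \<open>\<sigma> \<in> A\<close> \<open>\<rho> \<subseteq> \<sigma>\<close> \<rho>(2) by blast
  qed
  have "inj_on (insert v) ?T"
    using apex_notin_A unfolding simplices_def by (intro inj_onI) (metis (no_types, lifting) Diff_insert_absorb mem_Collect_eq)
  then have "boundary L (Suc k) (cone v c) \<tau>
      = (\<Sum>\<sigma> \<in> ?T. (- 1) ^ card {u \<in> insert v \<sigma>. u < the_elem (insert v \<sigma> - \<tau>)} * cone v c (insert v \<sigma>))"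
    using assms cofaces_containing_apex[OF \<open>v \<in> \<tau>\<close>, of k] unfolding boundary_def \<rho>_def
    by (simp add: sum.reindex)
  also have "\<dots> = (\<Sum>\<sigma> \<in> ?T. - insert_sign v \<rho> * ((- 1) ^ card {u \<in> \<sigma>. u < the_elem (\<sigma> - \<rho>)} * c \<sigma>))"
    by (rule sum.cong[OF refl summand])
  also have "\<dots> = - insert_sign v \<rho> * incidence_sum A k c \<rho>"
    unfolding incidence_sum_def by (simp add: sum_distrib_left)
  finally show ?thesis unfolding \<rho>_def .
qed

lemma boundary_cone:
  assumes c: "c \<in> chains A (Suc j)"
  shows "boundary L (Suc (Suc j)) (cone v c) = (\<lambda>\<tau>. c \<tau> - cone v (boundary A (Suc j) c) \<tau>)"
proof
  fix \<tau>
  show "boundary L (Suc (Suc j)) (cone v c) \<tau> = c \<tau> - cone v (boundary A (Suc j) c) \<tau>"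
  proof (cases "v \<in> \<tau>")
    case False
    then show ?thesis using boundary_cone_off_apex[OF c False] unfolding cone_def by simp
  next
    case True
    then have "c \<tau> = 0" using chains_outside[OF c] apex_notin_A by blast
    have iff: "\<tau> \<in> L \<and> card \<tau> = Suc (Suc j) \<longleftrightarrow> \<tau> - {v} \<in> A \<and> card (\<tau> - {v}) = Suc j"
    proof -
      have "finite \<tau>" if "\<tau> \<in> L \<or> \<tau> - {v} \<in> A"
        using that simplicial_complexD(2)[OF L] simplicial_complexD(2)[OF A] finite_Diff2 by blast
      then show ?thesis using True mem_L_iff apex_notin_K by (auto simp: card_Suc_Diff1)
    qed
    moreover have "\<tau> - {v} \<noteq> {}" if "card (\<tau> - {v}) = Suc j"
      using that by (metis card.empty nat.distinct(1))
    ultimately show ?thesis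
      using boundary_cone_at_apex[OF c True] \<open>c \<tau> = 0\<close> True
      unfolding cone_def boundary_eq_incidence_sum[of L] boundary_eq_incidence_sum[of A] by auto
  qed
qed

lemma in_boundaries_if_cone_boundary_vanishes:
  fixes c :: "'v set \<Rightarrow> 'f::field"
  assumes c: "c \<in> chains A j" and acyclic: "acyclic_complex A TYPE('f)"
    and vanish: "\<And>\<tau>. v \<in> \<tau> \<Longrightarrow> boundary L (Suc j) (cone v c) \<tau> = 0"
  shows "c \<in> boundaries A j"
proof (cases j)
  case 0
  have "{v} \<in> L" using mem_L_iff by auto
  then have "- insert_sign v {} * augmentation A c = 0"
    using boundary_cone_at_apex[OF c, of "{v}"] vanish[of "{v}"] 0 by (simp add: incidence_sum_empty)
  then show ?thesis using acyclic c 0 unfolding acyclic_complex_def by (auto simp: insert_sign_nonzero)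
next
  case (Suc i)
  have "boundary A (Suc i) c \<rho> = 0" for \<rho>
  proof (cases "\<rho> \<in> A \<and> card \<rho> = Suc i")
    case True
    then have "v \<notin> \<rho>" "finite \<rho>" using apex_notin_A simplicial_complexD(2)[OF A] by auto
    then have "insert v \<rho> \<in> L" "card (insert v \<rho>) = Suc j" "insert v \<rho> - {v} = \<rho>"
      using True Suc mem_L_iff by auto
    then have "- insert_sign v \<rho> * incidence_sum A j c \<rho> = 0"
      using boundary_cone_at_apex[OF c, of "insert v \<rho>"] vanish[of "insert v \<rho>"] by simp
    then show ?thesis using True Suc by (simp add: boundary_eq_incidence_sum insert_sign_nonzero)
  qed (auto simp: boundary_eq_incidence_sum)
  then have "c \<in> cycles A (Suc i)" using c Suc unfolding cycles_def by auto
  then show ?thesis using acyclic Suc unfolding acyclic_complex_def by blast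
qed

lemma base_part_in_chains: "z \<in> chains L k \<Longrightarrow> base_part v z \<in> chains K k"
  unfolding chains_def simplices_def base_part_def using mem_L_iff by auto

lemma link_part_in_chains:
  assumes z: "z \<in> chains L (Suc j)"
  shows "link_part v z \<in> chains A j"
  unfolding chains_def mem_Collect_eq
proof (intro allI impI)
  fix \<rho> assume "link_part v z \<rho> \<noteq> 0"
  then have \<rho>: "v \<notin> \<rho>" "\<rho> \<noteq> {}" "z (insert v \<rho>) \<noteq> 0"
    unfolding link_part_def by (auto split: if_splits)
  then have "insert v \<rho> \<in> L" "card (insert v \<rho>) = Suc (Suc j)"
    using z unfolding chains_def simplices_def by auto
  moreover have "insert v \<rho> - {v} = \<rho>" using \<rho> by auto
  ultimately have "\<rho> \<in> A" "finite \<rho>" using mem_L_iff \<rho> apex_notin_K simplicial_complexD(2)[OF L] by auto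
  then show "\<rho> \<in> simplices A j"
    using \<open>card (insert v \<rho>) = Suc (Suc j)\<close> \<rho> unfolding simplices_def by simp
qed

lemma base_plus_cone_link:
  assumes z: "z \<in> chains L (Suc j)"
  shows "z = (\<lambda>\<sigma>. base_part v z \<sigma> + cone v (link_part v z) \<sigma>)"
proof
  fix \<sigma>
  have "z {v} = 0" using z unfolding chains_def simplices_def by auto
  moreover have "insert v (\<sigma> - {v}) = \<sigma>" if "v \<in> \<sigma>" using that by auto
  ultimately show "z \<sigma> = base_part v z \<sigma> + cone v (link_part v z) \<sigma>"
    unfolding base_part_def cone_def link_part_def
    by (cases "\<sigma> = {v}") (auto simp: mult.assoc[symmetric] insert_sign_square)
qed

lemma boundary_cone_vertex:
  assumes "{w} \<in> A"
  shows "boundary L (Suc 0) (cone v (\<lambda>\<sigma>. if \<sigma> = {w} then 1 else 0)) =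
    (\<lambda>\<tau>. if \<tau> = {w} then 1 else if \<tau> = {v} then - 1 else (0::'f::field))"
proof
  fix \<tau>
  let ?\<delta> = "\<lambda>\<sigma>. if \<sigma> = {w} then 1 else (0::'f)"
  have \<delta>: "?\<delta> \<in> chains A 0" using assms unfolding chains_def simplices_def by auto
  have "w \<noteq> v" using apex_notin_A assms by auto
  consider "v \<notin> \<tau>" | "\<tau> = {v}" | "v \<in> \<tau>" "\<tau> \<noteq> {v}" by blast
  then show "boundary L (Suc 0) (cone v ?\<delta>) \<tau> = (if \<tau> = {w} then 1 else if \<tau> = {v} then - 1 else 0)"
  proof cases
    case 1
    then show ?thesis using boundary_cone_off_apex[OF \<delta>] by auto
  next
    case 2
    have "augmentation A ?\<delta> = 1"
      using assms simplicial_complexD(1)[OF A] unfolding augmentation_def simplices_def by simp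
    moreover have "{v} \<in> L" using mem_L_iff by simp
    ultimately show ?thesis
      using 2 \<open>w \<noteq> v\<close> boundary_cone_at_apex[OF \<delta>, of "{v}"]
      by (simp add: incidence_sum_empty insert_sign_def)
  next
    case 3
    then have "card \<tau> \<noteq> Suc 0" "\<tau> \<noteq> {w}" using \<open>w \<noteq> v\<close> by (auto simp: card_Suc_eq)
    then show ?thesis using 3 by (simp add: boundary_eq_incidence_sum)
  qed
qed

text \<open>The apex is homologous to any vertex \<open>w\<close> of \<open>A\<close>, through the edge \<open>{v, w}\<close>.\<close>

lemma homologous_cycle_in_base_degree_0:
  fixes z :: "'v set \<Rightarrow> 'f::field"
  assumes "A \<noteq> {}" and z: "z \<in> chains L 0"
  shows "\<exists>z'\<in>cycles K 0. (\<lambda>x. z x - z' x) \<in> boundaries L 0"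
proof -
  obtain w where w: "{w} \<in> A"
    using \<open>A \<noteq> {}\<close> simplicial_complexD(3,4)[OF A] by (metis all_not_in_conv empty_subsetI insert_subset)
  let ?\<delta> = "\<lambda>\<sigma>. if \<sigma> = {w} then 1 else (0::'f)"
  define z' where "z' = (\<lambda>\<sigma>. base_part v z \<sigma> + z {v} * ?\<delta> \<sigma>)"
  have "?\<delta> \<in> chains K 0" using w A_sub_K unfolding chains_def simplices_def by auto
  then have "(\<lambda>\<sigma>. z {v} * ?\<delta> \<sigma> + base_part v z \<sigma>) \<in> chains K 0"
    by (rule chains_lincomb[OF _ base_part_in_chains[OF z]])
  then have "z' \<in> cycles K 0"
    unfolding z'_def cycles_def boundary_degree_0[OF K] by (simp only: add.commute) simp
  moreover have "(\<lambda>x. z x - z' x) = boundary L (Suc 0) (cone v (\<lambda>x. - z {v} * ?\<delta> x))"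
  proof
    fix \<tau>
    have "w \<noteq> v" using apex_notin_A w by auto
    have "z \<tau> = 0" if "v \<in> \<tau>" "\<tau> \<noteq> {v}"
      using z that unfolding chains_def simplices_def by (auto simp: card_Suc_eq)
    then show "z \<tau> - z' \<tau> = boundary L (Suc 0) (cone v (\<lambda>x. - z {v} * ?\<delta> x)) \<tau>"
      unfolding cone_scale boundary_scale boundary_cone_vertex[OF w] z'_def base_part_def
      using \<open>w \<noteq> v\<close> by auto
  qed
  moreover have "cone v (\<lambda>x. - z {v} * ?\<delta> x) \<in> chains L (Suc 0)"
    using w by (intro cone_in_chains) (auto simp: chains_def simplices_def)
  ultimately show ?thesis unfolding boundaries_def by auto
qed

lemma boundary_base_plus_cone_link:
  assumes c: "c \<in> chains L (Suc k)"
  shows "boundary L (Suc k) c \<tau> =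
    boundary K (Suc k) (base_part v c) \<tau> + boundary L (Suc k) (cone v (link_part v c)) \<tau>"
proof -
  have "boundary L (Suc k) c = boundary L (Suc k) (\<lambda>\<sigma>. base_part v c \<sigma> + cone v (link_part v c) \<sigma>)"
    using base_plus_cone_link[OF c] by (rule arg_cong)
  then show ?thesis
    by (simp only: boundary_add boundary_subcomplex[OF K L K_sub_L base_part_in_chains[OF c]])
qed

lemma link_part_in_boundaries:
  fixes c :: "'v set \<Rightarrow> 'f::field"
  assumes acyclic: "acyclic_complex A TYPE('f)" and c: "c \<in> chains L (Suc k)"
    and off_K: "\<And>\<tau>. v \<in> \<tau> \<Longrightarrow> boundary L (Suc k) c \<tau> = 0"
  shows "link_part v c \<in> boundaries A k"
proof (rule in_boundaries_if_cone_boundary_vanishes[OF link_part_in_chains[OF c] acyclic])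
  fix \<tau> assume "v \<in> \<tau>"
  then have "boundary K (Suc k) (base_part v c) \<tau> = 0" using apex_notin_K by (intro boundary_outside) auto
  then show "boundary L (Suc k) (cone v (link_part v c)) \<tau> = 0"
    using off_K[OF \<open>v \<in> \<tau>\<close>] boundary_base_plus_cone_link[OF c, of \<tau>] by simp
qed

text \<open>With \<open>c = c\<^sub>K + v * a\<close> and \<open>a = \<partial>b\<close>, the chain \<open>c\<^sub>K + b\<close> of \<open>K\<close> differs from \<open>c\<close> by \<open>- \<partial>(v * b)\<close>.\<close>

lemma homologous_chain_in_base:
  fixes c :: "'v set \<Rightarrow> 'f::field"
  assumes acyclic: "acyclic_complex A TYPE('f)" and c: "c \<in> chains L (Suc k)"
    and off_K: "\<And>\<tau>. v \<in> \<tau> \<Longrightarrow> boundary L (Suc k) c \<tau> = 0"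
  obtains c' where "c' \<in> chains K (Suc k)" "boundary K (Suc k) c' = boundary L (Suc k) c"
    "(\<lambda>x. c x - c' x) \<in> boundaries L (Suc k)"
proof -
  let ?cK = "base_part v c" and ?a = "link_part v c"
  have a: "?a \<in> chains A k" using link_part_in_chains[OF c] .
  obtain b where b: "b \<in> chains A (Suc k)" "?a = boundary A (Suc k) b"
    using link_part_in_boundaries[OF assms] unfolding boundaries_def by auto
  define c' where "c' = (\<lambda>\<sigma>. ?cK \<sigma> + b \<sigma>)"
  have chain: "c' \<in> chains K (Suc k)"
    unfolding c'_def using chains_add[OF base_part_in_chains[OF c] chains_mono[OF A_sub_K b(1)]] .
  have "boundary K (Suc k) b = ?a" using boundary_subcomplex[OF A K A_sub_K b(1)] b(2) by simp
  then have boundary_c': "boundary K (Suc k) c' \<tau> = boundary K (Suc k) ?cK \<tau> + ?a \<tau>" for \<tau>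
    unfolding c'_def boundary_add by simp
  have same_boundary: "boundary K (Suc k) c' = boundary L (Suc k) c"
  proof
    fix \<tau>
    show "boundary K (Suc k) c' \<tau> = boundary L (Suc k) c \<tau>"
    proof (cases "v \<in> \<tau>")
      case True
      then have "\<tau> \<notin> K" "\<tau> \<notin> A" using apex_notin_K apex_notin_A by auto
      then show ?thesis using boundary_c' off_K[OF True] boundary_outside chains_outside[OF a] by simp
    next
      case False
      then show ?thesis
        using boundary_base_plus_cone_link[OF c] boundary_c' boundary_cone_off_apex[OF a] by simp
    qed
  qed
  have "boundary L (Suc (Suc k)) (cone v (\<lambda>x. - b x)) = (\<lambda>x. cone v ?a x - b x)"
    unfolding cone_uminus boundary_uminus boundary_cone[OF b(1)] b(2) by simp
  also have "\<dots> = (\<lambda>x. c x - c' x)"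
    unfolding c'_def by (subst (2) base_plus_cone_link[OF c]) simp
  finally have "(\<lambda>x. c x - c' x) \<in> boundaries L (Suc k)"
    using cone_in_chains[OF chains_uminus[OF b(1)]] unfolding boundaries_def by force
  with chain same_boundary show ?thesis by (rule that)
qed

theorem incl_homology_iso:
  assumes acyclic: "acyclic_complex A TYPE('f::field)"
  shows "incl_homology_iso K L TYPE('f)"
proof (rule incl_homology_isoI)
  fix k and z :: "'v set \<Rightarrow> 'f"
  assume z: "z \<in> cycles L k"
  show "\<exists>z'\<in>cycles K k. (\<lambda>x. z x - z' x) \<in> boundaries L k"
  proof (cases k)
    case 0
    then show ?thesis
      using homologous_cycle_in_base_degree_0 acyclic z unfolding acyclic_complex_def cycles_def by blast
  next
    case (Suc j)
    then have z: "z \<in> chains L (Suc j)" "boundary L (Suc j) z = (\<lambda>_. 0)"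
      using z unfolding cycles_def by auto
    obtain z' where "z' \<in> chains K (Suc j)" "boundary K (Suc j) z' = boundary L (Suc j) z"
      "(\<lambda>x. z x - z' x) \<in> boundaries L (Suc j)"
      by (rule homologous_chain_in_base[OF acyclic z(1)]) (simp add: z(2))
    then show ?thesis using Suc z(2) unfolding cycles_def by auto
  qed
next
  fix k and z :: "'v set \<Rightarrow> 'f"
  assume "z \<in> cycles K k" "z \<in> boundaries L k"
  then obtain c where c: "c \<in> chains L (Suc k)" "z = boundary L (Suc k) c" and "z \<in> chains K k"
    unfolding boundaries_def cycles_def by auto
  then have "boundary L (Suc k) c \<tau> = 0" if "v \<in> \<tau>" for \<tau>
    using that chains_outside apex_notin_K by metis
  then obtain c' where "c' \<in> chains K (Suc k)" "boundary K (Suc k) c' = z"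
    using homologous_chain_in_base[OF acyclic c(1)] c(2) by metis
  then show "z \<in> boundaries K k" unfolding boundaries_def by auto
qed

end

lemma augmentation_boundary:
  assumes A: "simplicial_complex A"
  shows "augmentation A (boundary A (Suc 0) b) = (0::'f::field)"
proof -
  have fin: "finite (simplices A k)" for k
    using simplicial_complexD(1)[OF A] unfolding simplices_def by simp
  let ?f = "\<lambda>\<tau> \<sigma>. (- 1) ^ card {u \<in> \<sigma>. u < the_elem (\<sigma> - \<tau>)} * (b \<sigma> :: 'f)"
  have "augmentation A (boundary A (Suc 0) b)
      = (\<Sum>\<tau>\<in>simplices A 0. \<Sum>\<sigma>\<in>{\<sigma> \<in> simplices A (Suc 0). \<tau> \<subseteq> \<sigma>}. ?f \<tau> \<sigma>)"
    unfolding augmentation_def boundary_def by (intro sum.cong refl) (auto simp: simplices_def)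
  also have "\<dots> = (\<Sum>\<sigma>\<in>simplices A (Suc 0). \<Sum>\<tau>\<in>{\<tau> \<in> simplices A 0. \<tau> \<subseteq> \<sigma>}. ?f \<tau> \<sigma>)"
    by (rule sum.swap_restrict[OF fin fin])
  also have "\<dots> = 0"
  proof (rule sum.neutral, rule ballI)
    fix \<sigma> assume "\<sigma> \<in> simplices A (Suc 0)"
    then have "card \<sigma> = 2" "\<sigma> \<in> A" unfolding simplices_def by auto
    then obtain x y where xy: "\<sigma> = {x, y}" "x < y"
      by (auto simp: card_2_iff linorder_neq_iff insert_commute)
    have "{\<tau> \<in> simplices A 0. \<tau> \<subseteq> \<sigma>} = {{x}, {y}}"
      using simplicial_complexD(4)[OF A \<open>\<sigma> \<in> A\<close>] unfolding xy simplices_def by (auto simp: card_Suc_eq)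
    moreover have "?f {x} \<sigma> = - b \<sigma>"
    proof -
      have "\<sigma> - {x} = {y}" "{u \<in> \<sigma>. u < y} = {x}" using xy by auto
      then show ?thesis by simp
    qed
    moreover have "?f {y} \<sigma> = b \<sigma>"
    proof -
      have "\<sigma> - {y} = {x}" "{u \<in> \<sigma>. u < x} = {}" using xy by auto
      then show ?thesis by (simp only: the_elem_eq card.empty power_0 mult_1_left)
    qed
    ultimately show "(\<Sum>\<tau>\<in>{\<tau> \<in> simplices A 0. \<tau> \<subseteq> \<sigma>}. ?f \<tau> \<sigma>) = 0"
      using xy by simp
  qed
  finally show ?thesis .
qed

lemma augmentation_subcomplex:
  assumes "simplicial_complex A" "D \<subseteq> A" "c \<in> chains D 0"
  shows "augmentation A c = augmentation D c"
  unfolding augmentation_def using assms simplicial_complexD(1)[OF assms(1)]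
  by (intro sum.mono_neutral_right) (auto simp: simplices_def chains_def)

lemma acyclic_complex_transfer:
  assumes D: "simplicial_complex D" and A: "simplicial_complex A" and "D \<subseteq> A"
    and iso: "incl_homology_iso D A TYPE('f::field)" and acyclic: "acyclic_complex D TYPE('f)"
  shows "acyclic_complex A TYPE('f)"
proof -
  have homologous_boundary: "c \<in> boundaries A k"
    if "c' \<in> boundaries D k" "(\<lambda>x. c x - c' x) \<in> boundaries A k" for c c' :: "'a set \<Rightarrow> 'f" and k
    using boundaries_add[OF that(2) subsetD[OF boundaries_mono[OF D A \<open>D \<subseteq> A\<close>] that(1)]] by simp
  show ?thesis
    unfolding acyclic_complex_def
  proof (intro conjI allI impI)
    show "A \<noteq> {}" using acyclic \<open>D \<subseteq> A\<close> unfolding acyclic_complex_def by auto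
  next
    fix c :: "'a set \<Rightarrow> 'f"
    assume c: "c \<in> chains A 0" "augmentation A c = 0"
    then obtain c' where c': "c' \<in> cycles D 0" "(\<lambda>x. c x - c' x) \<in> boundaries A 0"
      using incl_homology_isoD(1)[OF iso] boundary_degree_0[OF A] unfolding cycles_def by blast
    then obtain b where "(\<lambda>x. c x - c' x) = boundary A (Suc 0) b" unfolding boundaries_def by auto
    then have "augmentation A (\<lambda>x. c x - c' x) = 0" using augmentation_boundary[OF A] by simp
    then have "augmentation A c' = 0" using c(2) unfolding augmentation_def by (simp add: sum_subtractf)
    moreover have "c' \<in> chains D 0" using c' unfolding cycles_def by auto
    ultimately have "augmentation D c' = 0" using augmentation_subcomplex[OF A \<open>D \<subseteq> A\<close>] by metis
    then have "c' \<in> boundaries D 0"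
      using acyclic \<open>c' \<in> chains D 0\<close> unfolding acyclic_complex_def by blast
    then show "c \<in> boundaries A 0" using homologous_boundary c' by blast
  next
    fix k and c :: "'a set \<Rightarrow> 'f"
    assume "c \<in> cycles A (Suc k)"
    then obtain c' where "c' \<in> cycles D (Suc k)" "(\<lambda>x. c x - c' x) \<in> boundaries A (Suc k)"
      using incl_homology_isoD(1)[OF iso] by blast
    then show "c \<in> boundaries A (Suc k)"
      using homologous_boundary acyclic unfolding acyclic_complex_def by blast
  qed
qed

definition full_simplex :: "'a set \<Rightarrow> 'a set set" where
  "full_simplex S = {T. T \<noteq> {} \<and> T \<subseteq> S}"

lemma simplicial_complex_full_simplex: "finite S \<Longrightarrow> simplicial_complex (full_simplex S)"
  unfolding simplicial_complex_def full_simplex_def by (auto intro: finite_subset)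

lemma acyclic_full_simplex_singleton: "acyclic_complex (full_simplex {w}) TYPE('f::field)"
  unfolding acyclic_complex_def
proof (intro conjI allI impI)
  have full: "full_simplex {w} = {{w}}" unfolding full_simplex_def by auto
  then show "full_simplex {w} \<noteq> {}" by simp
  fix c :: "'a set \<Rightarrow> 'f"
  {
    assume c: "c \<in> chains (full_simplex {w}) 0" "augmentation (full_simplex {w}) c = 0"
    have "simplices (full_simplex {w}) 0 = {{w}}" unfolding full simplices_def by auto
    then have "c {w} = 0" using c(2) unfolding augmentation_def by simp
    then have "c = (\<lambda>_. 0)" using c(1) unfolding full chains_def simplices_def by auto
    then show "c \<in> boundaries (full_simplex {w}) 0" by simp
  next
    fix k assume "c \<in> cycles (full_simplex {w}) (Suc k)"
    then have "c = (\<lambda>_. 0)" unfolding full cycles_def chains_def simplices_def by (auto simp: fun_eq_iff)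
    then show "c \<in> boundaries (full_simplex {w}) (Suc k)" by simp
  }
qed

text \<open>A simplex is a cone over any of its facets.\<close>

lemma acyclic_full_simplex:
  assumes "finite S" "S \<noteq> {}"
  shows "acyclic_complex (full_simplex (S :: 'v::linorder set)) TYPE('f::field)"
  using assms
proof (induction S rule: finite_ne_induct)
  case (singleton w)
  show ?case by (rule acyclic_full_simplex_singleton)
next
  case (insert v F)
  interpret cone_extension "full_simplex F" "full_simplex F" "full_simplex (insert v F)" v
  proof
    show "simplicial_complex (full_simplex F)" using simplicial_complex_full_simplex[OF insert(1)] .
    show "v \<notin> \<sigma>" if "\<sigma> \<in> full_simplex F" for \<sigma> using that insert(3) unfolding full_simplex_def by auto
    show "full_simplex (insert v F) = full_simplex F \<union> insert v ` full_simplex F \<union> {{v}}"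
    proof
      show "full_simplex (insert v F) \<subseteq> full_simplex F \<union> insert v ` full_simplex F \<union> {{v}}"
      proof
        fix T assume T: "T \<in> full_simplex (insert v F)"
        show "T \<in> full_simplex F \<union> insert v ` full_simplex F \<union> {{v}}"
        proof (cases "v \<in> T \<and> T \<noteq> {v}")
          case True
          then have "T - {v} \<in> full_simplex F" "T = insert v (T - {v})"
            using T unfolding full_simplex_def by auto
          then show ?thesis by blast
        qed (use T in \<open>auto simp: full_simplex_def\<close>)
      qed
      show "full_simplex F \<union> insert v ` full_simplex F \<union> {{v}} \<subseteq> full_simplex (insert v F)"
        unfolding full_simplex_def by auto
    qed
  qed simp_all
  show ?case
    by (rule acyclic_complex_transfer[OF K L K_sub_L incl_homology_iso[OF insert(4)] insert(4)])
qed

section \<open>Dowker duality\<close>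

text \<open>The vertices in \<open>I\<close> are witnesses, the others are points. A simplex is a set of points and of
  witnesses from \<open>J\<close> each point of which is \<open>R\<close>-related to each witness; the extra point \<open>x\<close> and
  witness \<open>i\<close> exclude sides that are empty but unrelated to the other side.\<close>

definition rectangle_complex :: "'v set \<Rightarrow> ('v \<times> 'v) set \<Rightarrow> 'v set \<Rightarrow> 'v set set" where
  "rectangle_complex I R J =
     {T. T \<noteq> {} \<and> T \<inter> I \<subseteq> J \<and> (\<exists>x i. insert x (T - I) \<times> insert i (T \<inter> I) \<subseteq> R)}"

abbreviation dowker_complex :: "'v set \<Rightarrow> ('v \<times> 'v) set \<Rightarrow> 'v set set" where
  "dowker_complex I R \<equiv> rectangle_complex I R {}"

lemma rectangle_complexI:
  assumes "T \<noteq> {}" "T \<inter> I \<subseteq> J" "insert x (T - I) \<times> insert i (T \<inter> I) \<subseteq> R"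
  shows "T \<in> rectangle_complex I R J"
proof -
  have "\<exists>x i. insert x (T - I) \<times> insert i (T \<inter> I) \<subseteq> R" using assms(3) by (intro exI)
  then show ?thesis unfolding rectangle_complex_def using assms(1,2) by simp
qed

lemma rectangle_complexE:
  assumes "T \<in> rectangle_complex I R J"
  obtains x i where "T \<noteq> {}" "T \<inter> I \<subseteq> J" "insert x (T - I) \<times> insert i (T \<inter> I) \<subseteq> R"
  using assms unfolding rectangle_complex_def by blast

lemma dowker_complex_eq:
  assumes "R \<subseteq> (- I) \<times> I"
  shows "dowker_complex I R = {T. T \<noteq> {} \<and> (\<exists>i. \<forall>x\<in>T. (x, i) \<in> R)}"
proof
  show "dowker_complex I R \<subseteq> {T. T \<noteq> {} \<and> (\<exists>i. \<forall>x\<in>T. (x, i) \<in> R)}"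
    unfolding rectangle_complex_def by blast
  show "{T. T \<noteq> {} \<and> (\<exists>i. \<forall>x\<in>T. (x, i) \<in> R)} \<subseteq> dowker_complex I R"
  proof
    fix T assume "T \<in> {T. T \<noteq> {} \<and> (\<exists>i. \<forall>x\<in>T. (x, i) \<in> R)}"
    then obtain x i where "x \<in> T" "\<forall>x\<in>T. (x, i) \<in> R" "T \<noteq> {}" by auto
    moreover from this have "T \<inter> I = {}" using assms by blast
    ultimately have "insert x (T - I) \<times> insert i (T \<inter> I) \<subseteq> R" "T \<inter> I \<subseteq> {}" "T \<noteq> {}" by auto
    then show "T \<in> dowker_complex I R" unfolding rectangle_complex_def by blast
  qed
qed

lemma rectangle_complex_subset_Field: "T \<in> rectangle_complex I R J \<Longrightarrow> T \<subseteq> Field R"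
  unfolding rectangle_complex_def Field_def by blast

lemma simplicial_complex_rectangle_complex:
  assumes "finite R"
  shows "simplicial_complex (rectangle_complex I R J)"
  unfolding simplicial_complex_def
proof (intro conjI ballI allI impI)
  have "finite (Field R)" using assms by (simp add: finite_Field)
  moreover have "rectangle_complex I R J \<subseteq> Pow (Field R)" using rectangle_complex_subset_Field by blast
  ultimately show "finite (rectangle_complex I R J)" by (simp add: finite_subset)
  fix \<sigma> assume \<sigma>: "\<sigma> \<in> rectangle_complex I R J"
  show "finite \<sigma>" using rectangle_complex_subset_Field[OF \<sigma>] \<open>finite (Field R)\<close> by (rule finite_subset)
  show "\<sigma> \<noteq> {}" using \<sigma> unfolding rectangle_complex_def by simp
  fix \<tau> assume "\<tau> \<subseteq> \<sigma>" "\<tau> \<noteq> {}"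
  obtain x i where "insert x (\<sigma> - I) \<times> insert i (\<sigma> \<inter> I) \<subseteq> R" "\<sigma> \<inter> I \<subseteq> J"
    using \<sigma> by (rule rectangle_complexE)
  moreover have "insert x (\<tau> - I) \<times> insert i (\<tau> \<inter> I) \<subseteq> insert x (\<sigma> - I) \<times> insert i (\<sigma> \<inter> I)"
    using \<open>\<tau> \<subseteq> \<sigma>\<close> by auto
  ultimately show "\<tau> \<in> rectangle_complex I R J"
    using \<open>\<tau> \<subseteq> \<sigma>\<close> \<open>\<tau> \<noteq> {}\<close> by (intro rectangle_complexI) auto
qed

lemma rectangle_complex_mono:
  assumes "R \<subseteq> R'" "J \<subseteq> J'"
  shows "rectangle_complex I R J \<subseteq> rectangle_complex I R' J'"
proof
  fix T assume "T \<in> rectangle_complex I R J"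
  then obtain x i where "T \<noteq> {}" "T \<inter> I \<subseteq> J" "insert x (T - I) \<times> insert i (T \<inter> I) \<subseteq> R"
    by (rule rectangle_complexE)
  then show "T \<in> rectangle_complex I R' J'" using assms by (intro rectangle_complexI) auto
qed

lemma rectangle_complex_Range: "rectangle_complex I R (Range R) = rectangle_complex I R UNIV"
proof
  show "rectangle_complex I R UNIV \<subseteq> rectangle_complex I R (Range R)"
  proof
    fix T assume "T \<in> rectangle_complex I R UNIV"
    then obtain x i where "T \<noteq> {}" "insert x (T - I) \<times> insert i (T \<inter> I) \<subseteq> R"
      by (rule rectangle_complexE)
    moreover from this(2) have "T \<inter> I \<subseteq> Range R" by auto
    ultimately show "T \<in> rectangle_complex I R (Range R)" by (intro rectangle_complexI)
  qed
qed (rule rectangle_complex_mono; simp)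

lemma rectangle_complex_converse: "rectangle_complex (- I) (R\<inverse>) UNIV = rectangle_complex I R UNIV"
proof -
  have "(\<exists>x i. insert x (T - - I) \<times> insert i (T \<inter> - I) \<subseteq> R\<inverse>) \<longleftrightarrow>
        (\<exists>x i. insert x (T - I) \<times> insert i (T \<inter> I) \<subseteq> R)" for T
  proof -
    have sides: "T - - I = T \<inter> I" "T \<inter> - I = T - I" by auto
    have swap: "A \<times> B \<subseteq> R\<inverse> \<longleftrightarrow> B \<times> A \<subseteq> R" for A B by auto
    show ?thesis unfolding sides swap by auto
  qed
  then show ?thesis unfolding rectangle_complex_def by auto
qed

lemma insert_witness_rectangle_complex:
  assumes "\<alpha> \<in> I" "T \<in> rectangle_complex I {p \<in> R. (fst p, \<alpha>) \<in> R} J"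
  shows "insert \<alpha> T \<in> rectangle_complex I R (insert \<alpha> J)"
proof -
  obtain x i where xi: "T \<inter> I \<subseteq> J" "insert x (T - I) \<times> insert i (T \<inter> I) \<subseteq> {p \<in> R. (fst p, \<alpha>) \<in> R}"
    using assms(2) by (rule rectangle_complexE)
  have sides: "insert \<alpha> T - I = T - I" "insert \<alpha> T \<inter> I = insert \<alpha> (T \<inter> I)" using \<open>\<alpha> \<in> I\<close> by auto
  have "insert x (insert \<alpha> T - I) \<times> insert \<alpha> (insert \<alpha> T \<inter> I) \<subseteq> R"
    unfolding sides using xi(2) by auto
  then show ?thesis using xi(1) sides(2) by (intro rectangle_complexI) auto
qed

lemma remove_witness_rectangle_complex:
  assumes "\<alpha> \<in> I" "T \<in> rectangle_complex I R (insert \<alpha> J)" "\<alpha> \<in> T" "T - {\<alpha>} \<noteq> {}"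
  shows "T - {\<alpha>} \<in> rectangle_complex I {p \<in> R. (fst p, \<alpha>) \<in> R} J"
proof -
  obtain x i where xi: "T \<inter> I \<subseteq> insert \<alpha> J" "insert x (T - I) \<times> insert i (T \<inter> I) \<subseteq> R"
    using assms(2) by (rule rectangle_complexE)
  have sides: "T - {\<alpha>} - I = T - I" "insert \<alpha> ((T - {\<alpha>}) \<inter> I) \<subseteq> T \<inter> I"
    using assms(1,3) by auto
  have "insert x (T - {\<alpha>} - I) \<times> insert \<alpha> ((T - {\<alpha>}) \<inter> I) \<subseteq> {p \<in> R. (fst p, \<alpha>) \<in> R}"
  proof
    fix p assume "p \<in> insert x (T - {\<alpha>} - I) \<times> insert \<alpha> ((T - {\<alpha>}) \<inter> I)"
    then have "p \<in> R" "(fst p, \<alpha>) \<in> R" using xi(2) sides by auto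
    then show "p \<in> {p \<in> R. (fst p, \<alpha>) \<in> R}" by simp
  qed
  then show ?thesis using assms(4) xi(1) by (intro rectangle_complexI) auto
qed

text \<open>Admitting a further witness \<open>\<alpha>\<close> attaches the cone with apex \<open>\<alpha>\<close> over the rectangle complex of
  the relation restricted to the points related to \<open>\<alpha>\<close>.\<close>

lemma rectangle_complex_insert:
  assumes R: "R \<subseteq> (- I) \<times> I" and "\<alpha> \<in> Range R" "\<alpha> \<notin> J"
  shows "rectangle_complex I R (insert \<alpha> J) = rectangle_complex I R J \<union>
    insert \<alpha> ` rectangle_complex I {p \<in> R. (fst p, \<alpha>) \<in> R} J \<union> {{\<alpha>}}"
    (is "?L = ?K \<union> insert \<alpha> ` ?A \<union> _")
proof
  have "\<alpha> \<in> I" using R \<open>\<alpha> \<in> Range R\<close> by auto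
  show "?L \<subseteq> ?K \<union> insert \<alpha> ` ?A \<union> {{\<alpha>}}"
  proof
    fix T assume T: "T \<in> ?L"
    consider "\<alpha> \<notin> T" | "T = {\<alpha>}" | "\<alpha> \<in> T" "T - {\<alpha>} \<noteq> {}" by blast
    then show "T \<in> ?K \<union> insert \<alpha> ` ?A \<union> {{\<alpha>}}"
    proof cases
      case 1
      then show ?thesis using T unfolding rectangle_complex_def by blast
    next
      case 3
      then have "T - {\<alpha>} \<in> ?A" "T = insert \<alpha> (T - {\<alpha>})"
        using remove_witness_rectangle_complex[OF \<open>\<alpha> \<in> I\<close> T] by auto
      then show ?thesis by blast
    qed simp
  qed
  have "?K \<subseteq> ?L" by (rule rectangle_complex_mono) auto
  moreover have "{\<alpha>} \<in> ?L"
    using \<open>\<alpha> \<in> Range R\<close> \<open>\<alpha> \<in> I\<close> unfolding rectangle_complex_def by auto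
  ultimately show "?K \<union> insert \<alpha> ` ?A \<union> {{\<alpha>}} \<subseteq> ?L"
    using insert_witness_rectangle_complex[OF \<open>\<alpha> \<in> I\<close>] by blast
qed

lemma dowker_complex_restrict_eq_full_simplex:
  assumes "R \<subseteq> (- I) \<times> I"
  shows "dowker_complex I {p \<in> R. (fst p, \<alpha>) \<in> R} = full_simplex {x. (x, \<alpha>) \<in> R}"
proof -
  have "{p \<in> R. (fst p, \<alpha>) \<in> R} \<subseteq> (- I) \<times> I" using assms by auto
  from dowker_complex_eq[OF this] show ?thesis unfolding full_simplex_def by auto
qed

lemma cone_extension_rectangle_complex_insert:
  assumes "finite R" "R \<subseteq> (- I) \<times> I" "\<alpha> \<in> Range R" "\<alpha> \<notin> J"
  shows "cone_extension (rectangle_complex I R J) (rectangle_complex I {p \<in> R. (fst p, \<alpha>) \<in> R} J)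
    (rectangle_complex I R (insert \<alpha> J)) \<alpha>"
proof
  show "simplicial_complex (rectangle_complex I R J)"
    using \<open>finite R\<close> by (rule simplicial_complex_rectangle_complex)
  show "simplicial_complex (rectangle_complex I {p \<in> R. (fst p, \<alpha>) \<in> R} J)"
    using \<open>finite R\<close> by (intro simplicial_complex_rectangle_complex) simp
  show "rectangle_complex I {p \<in> R. (fst p, \<alpha>) \<in> R} J \<subseteq> rectangle_complex I R J"
    by (rule rectangle_complex_mono) auto
  show "\<alpha> \<notin> \<sigma>" if "\<sigma> \<in> rectangle_complex I R J" for \<sigma>
    using that assms(2-4) unfolding rectangle_complex_def by blast
  show "rectangle_complex I R (insert \<alpha> J) =
      rectangle_complex I R J \<union> insert \<alpha> ` rectangle_complex I {p \<in> R. (fst p, \<alpha>) \<in> R} J \<union> {{\<alpha>}}"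
    using assms(2-4) by (rule rectangle_complex_insert)
qed

lemma incl_homology_iso_dowker_rectangle:
  assumes "finite J" "finite R" "R \<subseteq> (- I) \<times> I"
  shows "incl_homology_iso (dowker_complex I R) (rectangle_complex I R J) TYPE('f::field)"
  using assms
proof (induction J arbitrary: R rule: finite_induct)
  case empty
  show ?case by (rule incl_homology_iso_refl)
next
  case (insert \<alpha> J)
  note complex = simplicial_complex_rectangle_complex[OF \<open>finite R\<close>]
  have IH: "incl_homology_iso (dowker_complex I R) (rectangle_complex I R J) TYPE('f)"
    using insert.IH insert.prems .
  show ?case
  proof (cases "\<alpha> \<in> Range R")
    case False
    then have "rectangle_complex I R (insert \<alpha> J) = rectangle_complex I R J"
      unfolding rectangle_complex_def by blast
    then show ?thesis using IH by simp
  next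
    case True
    let ?R\<alpha> = "{p \<in> R. (fst p, \<alpha>) \<in> R}"
    have R\<alpha>: "finite ?R\<alpha>" "?R\<alpha> \<subseteq> (- I) \<times> I" using insert.prems by auto
    have "finite {x. (x, \<alpha>) \<in> R}" by (rule finite_subset[OF _ finite_Domain[OF \<open>finite R\<close>]]) auto
    moreover have "{x. (x, \<alpha>) \<in> R} \<noteq> {}" using True by auto
    ultimately have "acyclic_complex (dowker_complex I ?R\<alpha>) TYPE('f)"
      unfolding dowker_complex_restrict_eq_full_simplex[OF insert.prems(2)] by (rule acyclic_full_simplex)
    then have "acyclic_complex (rectangle_complex I ?R\<alpha> J) TYPE('f)"
      using acyclic_complex_transfer[OF simplicial_complex_rectangle_complex simplicial_complex_rectangle_complex
          rectangle_complex_mono insert.IH[OF R\<alpha>]] R\<alpha> by blast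
    with cone_extension_rectangle_complex_insert[OF insert.prems True \<open>\<alpha> \<notin> J\<close>]
    have "incl_homology_iso (rectangle_complex I R J) (rectangle_complex I R (insert \<alpha> J)) TYPE('f)"
      by (rule cone_extension.incl_homology_iso)
    then show ?thesis
      using incl_homology_iso_trans[OF complex complex complex rectangle_complex_mono rectangle_complex_mono IH]
      by blast
  qed
qed

lemma incl_homology_iso_dowker_rectangle_UNIV:
  assumes "finite R" "R \<subseteq> (- I) \<times> I"
  shows "incl_homology_iso (dowker_complex I R) (rectangle_complex I R UNIV) TYPE('f::field)"
  using incl_homology_iso_dowker_rectangle[OF finite_Range[OF \<open>finite R\<close>] assms]
  unfolding rectangle_complex_Range .

text \<open>Both Dowker complexes of \<open>R\<close> sit in its rectangle complex, naturally in \<open>R\<close>, and both inclusions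
  are homology isomorphisms.\<close>

theorem functorial_dowker:
  assumes "R \<subseteq> R'" "finite R'" "R' \<subseteq> (- I) \<times> I"
  shows "(pers_homology (dowker_complex (- I) (R\<inverse>)) (dowker_complex (- I) (R'\<inverse>)) k
      :: ('v::linorder set \<Rightarrow> 'f::field) set set)
    \<cong>\<^sub>Q pers_homology (dowker_complex I R) (dowker_complex I R') k"
proof -
  have complex: "simplicial_complex (rectangle_complex I' S J)" if "S \<subseteq> R'" for I' S J
    using finite_subset[OF that \<open>finite R'\<close>] by (rule simplicial_complex_rectangle_complex)
  have complex_converse: "simplicial_complex (rectangle_complex I' (S\<inverse>) J)" if "S \<subseteq> R'" for I' S J
    using finite_subset[OF that \<open>finite R'\<close>] by (intro simplicial_complex_rectangle_complex) simp
  have K_sub: "dowker_complex I S \<subseteq> rectangle_complex I S UNIV" for S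
    by (rule rectangle_complex_mono) auto
  have N_sub: "dowker_complex (- I) (S\<inverse>) \<subseteq> rectangle_complex I S UNIV" for S
    using rectangle_complex_mono[of "S\<inverse>" "S\<inverse>" "{}" UNIV "- I"] unfolding rectangle_complex_converse by simp
  have K_iso: "incl_homology_iso (dowker_complex I S) (rectangle_complex I S UNIV) TYPE('f)"
    if "S \<subseteq> R'" for S
    using finite_subset[OF that assms(2)] that assms(3) by (intro incl_homology_iso_dowker_rectangle_UNIV) auto
  have N_iso: "incl_homology_iso (dowker_complex (- I) (S\<inverse>)) (rectangle_complex I S UNIV) TYPE('f)"
    if "S \<subseteq> R'" for S
    using incl_homology_iso_dowker_rectangle_UNIV[of "S\<inverse>" "- I"] that assms(3) finite_subset[OF that assms(2)]
    unfolding rectangle_complex_converse by auto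
  have "(pers_homology (dowker_complex (- I) (R\<inverse>)) (dowker_complex (- I) (R'\<inverse>)) k
      :: ('v set \<Rightarrow> 'f) set set) \<cong>\<^sub>Q pers_homology (rectangle_complex I R UNIV) (rectangle_complex I R' UNIV) k"
    by (rule pers_homology_iso_of_incl[OF complex_converse[OF assms(1)] complex_converse[OF order_refl]
          complex[OF assms(1)] complex[OF order_refl] rectangle_complex_mono[OF converse_mono[THEN iffD2]]
          rectangle_complex_mono N_sub N_sub N_iso[OF assms(1)] N_iso[OF order_refl]])
      (use assms(1) in auto)
  also have "\<dots> \<cong>\<^sub>Q pers_homology (dowker_complex I R) (dowker_complex I R') k"
    by (rule quot_iso_sym[OF pers_homology_iso_of_incl[OF complex[OF assms(1)] complex[OF order_refl]
          complex[OF assms(1)] complex[OF order_refl] rectangle_complex_mono rectangle_complex_mono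
          K_sub K_sub K_iso[OF assms(1)] K_iso[OF order_refl]] pers_homology_lincomb_closed])
      (use assms(1) in auto)
  finally show ?thesis .
qed

section \<open>Relabelling vertices\<close>

definition relabel :: "('a \<Rightarrow> 'v) \<Rightarrow> ('a set \<Rightarrow> 'f::field) \<Rightarrow> ('v set \<Rightarrow> 'f)" where
  "relabel f c = (\<lambda>\<tau>. if \<tau> \<subseteq> range f then c (f -` \<tau>) else 0)"

text \<open>An order embedding of the vertices preserves the orientation signs, so relabelling commutes with
  the boundary.\<close>

context
  fixes f :: "'a::linorder \<Rightarrow> 'v::linorder"
  assumes mono: "strict_mono f"
begin

lemma relabel_image: "relabel f c (f ` \<sigma>) = c \<sigma>"
  unfolding relabel_def using strict_mono_imp_inj_on[OF mono] by (auto simp: inj_vimage_image_eq)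

lemma inj_relabel: "inj (relabel f :: ('a set \<Rightarrow> 'f::field) \<Rightarrow> _)"
proof (rule injI)
  fix c d :: "'a set \<Rightarrow> 'f" assume "relabel f c = relabel f d"
  then have "relabel f c (f ` \<sigma>) = relabel f d (f ` \<sigma>)" for \<sigma> by simp
  then show "c = d" unfolding relabel_image by auto
qed

lemma relabel_lincomb: "relabel f (\<lambda>x. a * u x + w x) = (\<lambda>x. a * relabel f u x + relabel f w x)"
  unfolding relabel_def by auto

lemma relabel_zero: "relabel f (\<lambda>_. 0) = (\<lambda>_. 0)"
  unfolding relabel_def by auto

lemma relabel_chains: "relabel f ` chains K k = chains ((`) f ` K) k"
proof
  have card: "card (f ` \<sigma>) = card \<sigma>" for \<sigma>
    using strict_mono_imp_inj_on[OF mono] by (simp add: card_image inj_on_subset)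
  show "relabel f ` chains K k \<subseteq> chains ((`) f ` K) k"
  proof
    fix d assume "d \<in> relabel f ` chains K k"
    then obtain c where c: "c \<in> chains K k" "d = relabel f c" by auto
    show "d \<in> chains ((`) f ` K) k"
      unfolding chains_def mem_Collect_eq
    proof (intro allI impI)
      fix \<tau> assume "d \<tau> \<noteq> 0"
      then have "\<tau> \<subseteq> range f" "c (f -` \<tau>) \<noteq> 0" using c unfolding relabel_def by (auto split: if_splits)
      then have \<tau>: "f -` \<tau> \<in> K" "card (f -` \<tau>) = Suc k" "f ` (f -` \<tau>) = \<tau>"
        using c unfolding chains_def simplices_def by auto
      then have "\<tau> \<in> (`) f ` K" using rev_image_eqI[OF \<tau>(1), of \<tau> "(`) f"] by simp
      moreover have "card \<tau> = Suc k" using card[of "f -` \<tau>"] \<tau>(2,3) by simp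
      ultimately show "\<tau> \<in> simplices ((`) f ` K) k" unfolding simplices_def by simp
    qed
  qed
  show "chains ((`) f ` K) k \<subseteq> relabel f ` chains K k"
  proof
    fix d assume d: "d \<in> chains ((`) f ` K) k"
    have "(\<lambda>\<sigma>. d (f ` \<sigma>)) \<in> chains K k"
      using d strict_mono_imp_inj_on[OF mono] unfolding chains_def simplices_def by (auto simp: card inj_image_eq_iff)
    moreover have "d = relabel f (\<lambda>\<sigma>. d (f ` \<sigma>))"
      using d unfolding relabel_def chains_def simplices_def by (auto simp: image_vimage_eq fun_eq_iff Int_absorb2)
    ultimately show "d \<in> relabel f ` chains K k" by blast
  qed
qed

lemma incidence_sum_relabel:
  assumes "card \<rho> = k"
  shows "incidence_sum ((`) f ` K) k (relabel f c) (f ` \<rho>) = incidence_sum K k c \<rho>"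
  unfolding incidence_sum_def
proof (rule sum.reindex_cong)
  note inj = strict_mono_imp_inj_on[OF mono]
  show "inj_on ((`) f) {\<sigma> \<in> simplices K k. \<rho> \<subseteq> \<sigma>}" using inj by (auto intro: inj_onI simp: inj_image_eq_iff)
  show "{\<sigma> \<in> simplices ((`) f ` K) k. f ` \<rho> \<subseteq> \<sigma>} = (`) f ` {\<sigma> \<in> simplices K k. \<rho> \<subseteq> \<sigma>}"
    using inj unfolding simplices_def by (auto simp: card_image inj_on_subset inj_image_subset_iff)
  fix \<sigma> assume "\<sigma> \<in> {\<sigma> \<in> simplices K k. \<rho> \<subseteq> \<sigma>}"
  then have "card \<sigma> = Suc k" "\<rho> \<subseteq> \<sigma>" unfolding simplices_def by auto
  moreover from this have "finite \<sigma>" by (simp add: card_ge_0_finite)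
  ultimately have "card (\<sigma> - \<rho>) = 1" using assms by (simp add: card_Diff_subset finite_subset)
  then obtain u where u: "\<sigma> - \<rho> = {u}" by (auto simp: card_Suc_eq)
  then have "f ` \<sigma> - f ` \<rho> = {f u}" using inj by (simp add: image_set_diff[symmetric])
  moreover have "{w \<in> f ` \<sigma>. w < f u} = f ` {w \<in> \<sigma>. w < u}" using strict_mono_less[OF mono] by auto
  ultimately show "(- 1) ^ card {w \<in> f ` \<sigma>. w < the_elem (f ` \<sigma> - f ` \<rho>)} * relabel f c (f ` \<sigma>)
      = (- 1) ^ card {w \<in> \<sigma>. w < the_elem (\<sigma> - \<rho>)} * c \<sigma>"
    using inj u by (simp add: relabel_image card_image inj_on_subset)
qed

lemma relabel_boundary: "relabel f (boundary K k c) = boundary ((`) f ` K) k (relabel f c)"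
proof
  fix \<tau>
  show "relabel f (boundary K k c) \<tau> = boundary ((`) f ` K) k (relabel f c) \<tau>"
  proof (cases "\<tau> \<in> (`) f ` K")
    case True
    then obtain \<rho> where "\<rho> \<in> K" "\<tau> = f ` \<rho>" by auto
    moreover have "card (f ` \<rho>) = card \<rho>" using strict_mono_imp_inj_on[OF mono] by (simp add: card_image inj_on_subset)
    ultimately show ?thesis
      by (simp add: relabel_image boundary_eq_incidence_sum incidence_sum_relabel)
  next
    case False
    have "f -` \<tau> \<notin> K" if "\<tau> \<subseteq> range f"
    proof
      assume "f -` \<tau> \<in> K"
      then have "f ` (f -` \<tau>) \<in> (`) f ` K" by blast
      then show False using False that by (simp add: image_vimage_eq Int_absorb2)
    qed
    then show ?thesis using False unfolding relabel_def by (simp add: boundary_outside)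
  qed
qed

lemma pers_homology_relabel_iso:
  "(pers_homology K K' k :: ('a set \<Rightarrow> 'f::field) set set) \<cong>\<^sub>Q
     (pers_homology ((`) f ` K) ((`) f ` K') k :: ('v set \<Rightarrow> 'f) set set)"
  using chain_map_cycles_boundaries[OF inj_relabel relabel_zero relabel_boundary relabel_chains]
  by (intro pers_homology_iso_of_chain_map[OF inj_relabel relabel_lincomb])

end

section \<open>Multiscale clustering filtration and nerve\<close>

text \<open>Points and clusters become vertices of a single linearly ordered type, where the filtration and
  the nerve are the two Dowker complexes of the membership relation.\<close>

definition point_vertex :: "'a \<Rightarrow> 'a option \<times> (nat \<times> nat) option" where
  "point_vertex x = (Some x, None)"

definition cluster_vertex :: "nat \<times> nat \<Rightarrow> 'a option \<times> (nat \<times> nat) option" where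
  "cluster_vertex \<alpha> = (None, Some \<alpha>)"

abbreviation cluster_vertices :: "('a option \<times> (nat \<times> nat) option) set" where
  "cluster_vertices \<equiv> range cluster_vertex"

definition membership ::
  "(nat \<Rightarrow> nat) \<Rightarrow> (nat \<Rightarrow> nat \<Rightarrow> 'a set) \<Rightarrow> nat \<Rightarrow> ('a option \<times> (nat \<times> nat) option) rel" where
  "membership n C m = {(point_vertex x, cluster_vertex \<alpha>) | x \<alpha>. \<alpha> \<in> index_set n m \<and> x \<in> C (fst \<alpha>) (snd \<alpha>)}"

lemma strict_mono_point_vertex: "strict_mono (point_vertex :: 'a::linorder \<Rightarrow> _)"
  unfolding point_vertex_def by (auto intro!: strict_monoI simp: less_prod_def)

lemma strict_mono_cluster_vertex: "strict_mono (cluster_vertex :: _ \<Rightarrow> 'a::linorder option \<times> _)"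
  unfolding cluster_vertex_def by (auto intro!: strict_monoI simp: less_prod_def)

lemma point_cluster_in_membership [simp]:
  "(point_vertex x, cluster_vertex \<alpha>) \<in> membership n C m \<longleftrightarrow> \<alpha> \<in> index_set n m \<and> x \<in> C (fst \<alpha>) (snd \<alpha>)"
  unfolding membership_def point_vertex_def cluster_vertex_def by (cases \<alpha>) auto

lemma membershipE:
  assumes "(p, q) \<in> membership n C m"
  obtains x \<alpha> where "p = point_vertex x" "q = cluster_vertex \<alpha>"
  using assms unfolding membership_def by auto

lemma membership_subset: "membership n C m \<subseteq> (- cluster_vertices) \<times> cluster_vertices"
  unfolding membership_def point_vertex_def cluster_vertex_def by auto

lemma membership_mono: "m \<le> m' \<Longrightarrow> membership n C m \<subseteq> membership n C m'"
  unfolding membership_def index_set_def by fastforce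

lemma finite_membership:
  assumes "finite X" and partitions: "\<And>l. l \<in> {1..m} \<Longrightarrow> enum_partition X (n l) (C l)"
  shows "finite (membership n C m)"
proof -
  have "C (fst \<alpha>) (snd \<alpha>) \<subseteq> X" if \<alpha>: "\<alpha> \<in> index_set n m" for \<alpha>
  proof -
    obtain l i where "\<alpha> = (l, i)" "l \<in> {1..m}" "i \<in> {1..n l}"
      using \<alpha> unfolding index_set_def by auto
    then show ?thesis using partitions[of l] unfolding enum_partition_def by auto
  qed
  then have sub: "membership n C m \<subseteq> (\<lambda>(x, \<alpha>). (point_vertex x, cluster_vertex \<alpha>)) ` (X \<times> index_set n m)"
    unfolding membership_def by (fastforce simp: image_iff)
  have "index_set n m \<subseteq> Sigma {1..m} (\<lambda>l. {1..n l})" unfolding index_set_def by auto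
  then have "finite (index_set n m)" by (rule finite_subset) auto
  then show ?thesis using sub \<open>finite X\<close> by (rule_tac finite_subset) auto
qed

lemma mem_MCF_iff: "S \<in> MCF n C m \<longleftrightarrow> S \<noteq> {} \<and> (\<exists>l i. (l, i) \<in> index_set n m \<and> S \<subseteq> C l i)"
  unfolding MCF_def index_set_def by (auto simp: Bex_def)

lemma dowker_membership_eq_MCF:
  "dowker_complex cluster_vertices (membership n C m) = (`) point_vertex ` MCF n C m"
proof -
  have "T \<in> (`) point_vertex ` MCF n C m \<longleftrightarrow> T \<noteq> {} \<and> (\<exists>i. \<forall>t\<in>T. (t, i) \<in> membership n C m)" for T
  proof
    assume "T \<in> (`) point_vertex ` MCF n C m"
    then obtain S where "T = point_vertex ` S" "S \<in> MCF n C m" by blast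
    moreover from this(2) obtain l i where "S \<noteq> {}" "(l, i) \<in> index_set n m" "S \<subseteq> C l i"
      unfolding mem_MCF_iff by blast
    ultimately have "T \<noteq> {}" "\<forall>t\<in>T. (t, cluster_vertex (l, i)) \<in> membership n C m" by auto
    then show "T \<noteq> {} \<and> (\<exists>i. \<forall>t\<in>T. (t, i) \<in> membership n C m)" by blast
  next
    assume "T \<noteq> {} \<and> (\<exists>i. \<forall>t\<in>T. (t, i) \<in> membership n C m)"
    then obtain i t0 where T: "t0 \<in> T" "\<forall>t\<in>T. (t, i) \<in> membership n C m" by auto
    then obtain \<alpha> where \<alpha>: "i = cluster_vertex \<alpha>" by (blast elim: membershipE)
    have "T \<subseteq> range point_vertex" using T(2) by (blast elim: membershipE)
    then have "T = point_vertex ` (point_vertex -` T)" by auto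
    moreover have "point_vertex -` T \<in> MCF n C m"
    proof -
      obtain x0 where "t0 = point_vertex x0" using T by (blast elim: membershipE)
      then have "x0 \<in> point_vertex -` T" "\<alpha> \<in> index_set n m" using T \<alpha> by auto
      moreover have "point_vertex -` T \<subseteq> C (fst \<alpha>) (snd \<alpha>)"
      proof
        fix x assume "x \<in> point_vertex -` T"
        then have "(point_vertex x, cluster_vertex \<alpha>) \<in> membership n C m" using T(2) \<alpha> by blast
        then show "x \<in> C (fst \<alpha>) (snd \<alpha>)" by simp
      qed
      ultimately show ?thesis unfolding mem_MCF_iff by (metis emptyE prod.collapse)
    qed
    ultimately show "T \<in> (`) point_vertex ` MCF n C m" by blast
  qed
  then show ?thesis unfolding dowker_complex_eq[OF membership_subset] by blast
qed

lemma dowker_membership_eq_MCN: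
  "dowker_complex (- cluster_vertices) ((membership n C m)\<inverse>) = (`) cluster_vertex ` MCN n C m"
proof -
  have "(membership n C m)\<inverse> \<subseteq> (- (- cluster_vertices)) \<times> (- cluster_vertices)"
    using membership_subset[of n C m] by blast
  then have dowker: "dowker_complex (- cluster_vertices) ((membership n C m)\<inverse>) =
      {T. T \<noteq> {} \<and> (\<exists>i. \<forall>t\<in>T. (i, t) \<in> membership n C m)}"
    by (simp add: dowker_complex_eq)
  have "T \<in> (`) cluster_vertex ` MCN n C m \<longleftrightarrow> T \<noteq> {} \<and> (\<exists>i. \<forall>t\<in>T. (i, t) \<in> membership n C m)" for T
  proof
    assume "T \<in> (`) cluster_vertex ` MCN n C m"
    then obtain S x where "T = cluster_vertex ` S" "S \<noteq> {}" "S \<subseteq> index_set n m"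
      "x \<in> (\<Inter>\<alpha> \<in> S. C (fst \<alpha>) (snd \<alpha>))"
      unfolding MCN_def by blast
    then have "T \<noteq> {}" "\<forall>t\<in>T. (point_vertex x, t) \<in> membership n C m" by auto
    then show "T \<noteq> {} \<and> (\<exists>i. \<forall>t\<in>T. (i, t) \<in> membership n C m)" by blast
  next
    assume "T \<noteq> {} \<and> (\<exists>i. \<forall>t\<in>T. (i, t) \<in> membership n C m)"
    then obtain i t0 where T: "t0 \<in> T" "\<forall>t\<in>T. (i, t) \<in> membership n C m" by auto
    then obtain x where x: "i = point_vertex x" by (blast elim: membershipE)
    have "T \<subseteq> cluster_vertices" using T(2) by (blast elim: membershipE)
    then have "T = cluster_vertex ` (cluster_vertex -` T)" by auto
    moreover have "\<alpha> \<in> index_set n m \<and> x \<in> C (fst \<alpha>) (snd \<alpha>)" if "\<alpha> \<in> cluster_vertex -` T" for \<alpha>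
    proof -
      have "(point_vertex x, cluster_vertex \<alpha>) \<in> membership n C m" using T(2) x that by blast
      then show ?thesis by simp
    qed
    then have "cluster_vertex -` T \<in> MCN n C m"
      using \<open>T = cluster_vertex ` (cluster_vertex -` T)\<close> \<open>t0 \<in> T\<close> unfolding MCN_def by blast
    ultimately show "T \<in> (`) cluster_vertex ` MCN n C m" by blast
  qed
  then show ?thesis unfolding dowker by blast
qed

theorem proposition7:
  fixes X :: "'a::linorder set" and M :: nat
    and n :: "nat \<Rightarrow> nat" and C :: "nat \<Rightarrow> nat \<Rightarrow> 'a set"
    and k m p :: nat
  assumes "finite X"
    and "\<And>l. l \<in> {1..M} \<Longrightarrow> enum_partition X (n l) (C l)"
    and "1 \<le> m" and "m + p \<le> M"
  shows "(pers_homology (MCN n C m) (MCN n C (m + p)) k :: ((nat \<times> nat) set \<Rightarrow> 'f::field) set set)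
           \<cong>\<^sub>Q (pers_homology (MCF n C m) (MCF n C (m + p)) k :: ('a set \<Rightarrow> 'f) set set)"
proof -
  let ?R = "membership n C m" and ?R' = "membership n C (m + p)"
  have R: "?R \<subseteq> ?R'" "finite ?R'" "?R' \<subseteq> (- cluster_vertices) \<times> cluster_vertices"
    using assms by (auto intro!: membership_mono finite_membership membership_subset)
  have "(pers_homology (MCN n C m) (MCN n C (m + p)) k :: ((nat \<times> nat) set \<Rightarrow> 'f) set set)
      \<cong>\<^sub>Q pers_homology (dowker_complex (- cluster_vertices) (?R\<inverse>)) (dowker_complex (- cluster_vertices) (?R'\<inverse>)) k"
    unfolding dowker_membership_eq_MCN by (rule pers_homology_relabel_iso[OF strict_mono_cluster_vertex])
  also have "\<dots> \<cong>\<^sub>Q pers_homology (dowker_complex cluster_vertices ?R) (dowker_complex cluster_vertices ?R') k"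
    using R by (rule functorial_dowker)
  also have "\<dots> \<cong>\<^sub>Q (pers_homology (MCF n C m) (MCF n C (m + p)) k :: ('a set \<Rightarrow> 'f) set set)"
    unfolding dowker_membership_eq_MCF
    by (rule quot_iso_sym[OF pers_homology_relabel_iso[OF strict_mono_point_vertex] pers_homology_lincomb_closed])
  finally show ?thesis .
qed

end
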